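(* Let $\phi$ be a qubit channel (completely positive, trace-preserving map on $\mathcal M(2;\mathbb C)$) with $\det\phi=0$. Then $\phi$ is entanglement-breaking.
   Context: $\det\phi$ is the determinant of $\phi$ as a linear operator on the 4-dimensional space $\mathcal M(2;\mathbb C)$. A channel is entanglement-breaking if $(\phi\otimes I)(\rho)$ is separable for every bipartite state $\rho$. *)

theory Defs
  imports "Jordan_Normal_Form.Determinant"
begin

text \<open>The qubit
 algebra M(2;C) is carrier_mat 2 2. The composite system C^2 (x) C^n is indexed
 by a*n + k with a < 2 (qubit index) and k < n (ancilla index).\<close>

definition trace :: "complex mat \<Rightarrow> complex" where
  "trace A = (\<Sum>i<dim_row A. A $$ (i, i))"

definition psd :: "nat \<Rightarrow> complex mat \<Rightarrow> bool" where
  "psd n A \<longleftrightarrow> A \<in> carrier_mat n n \<and>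
     (\<forall>v :: nat \<Rightarrow> complex. \<exists>r::real. r \<ge> 0 \<and>
        (\<Sum>i<n. \<Sum>j<n. cnj (v i) * A $$ (i, j) * v j) = complex_of_real r)"

definition is_state :: "nat \<Rightarrow> complex mat \<Rightarrow> bool" where
  "is_state n A \<longleftrightarrow> psd n A \<and> trace A = 1"

definition kron :: "complex mat \<Rightarrow> complex mat \<Rightarrow> complex mat" where
  "kron A B = mat (dim_row A * dim_row B) (dim_col A * dim_col B)
     (\<lambda>(i, j). A $$ (i div dim_row B, j div dim_col B) * B $$ (i mod dim_row B, j mod dim_col B))"

text \<open>(phi (x) I_n)(rho) for rho acting on C^2 (x) C^n: apply phi to each 2x2 block
 rho_{kl} = (rho((a,k),(b,l)))_{a,b}.\<close>
definition tensor_id :: "(complex mat \<Rightarrow> complex mat) \<Rightarrow> nat \<Rightarrow> complex mat \<Rightarrow> complex mat" where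
  "tensor_id \<phi> n \<rho> = mat (2 * n) (2 * n)
     (\<lambda>(i, j). (\<phi> (mat 2 2 (\<lambda>(a, b). \<rho> $$ (a * n + i mod n, b * n + j mod n)))) $$ (i div n, j div n))"

definition qubit_linear :: "(complex mat \<Rightarrow> complex mat) \<Rightarrow> bool" where
  "qubit_linear \<phi> \<longleftrightarrow>
     (\<forall>X \<in> carrier_mat 2 2. \<phi> X \<in> carrier_mat 2 2) \<and>
     (\<forall>X \<in> carrier_mat 2 2. \<forall>Y \<in> carrier_mat 2 2. \<phi> (X + Y) = \<phi> X + \<phi> Y) \<and>
     (\<forall>X \<in> carrier_mat 2 2. \<forall>c. \<phi> (c \<cdot>\<^sub>m X) = c \<cdot>\<^sub>m \<phi> X)"

definition completely_positive :: "(complex mat \<Rightarrow> complex mat) \<Rightarrow> bool" where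
  "completely_positive \<phi> \<longleftrightarrow>
     (\<forall>n \<rho>. psd (2 * n) \<rho> \<longrightarrow> psd (2 * n) (tensor_id \<phi> n \<rho>))"

definition trace_preserving :: "(complex mat \<Rightarrow> complex mat) \<Rightarrow> bool" where
  "trace_preserving \<phi> \<longleftrightarrow> (\<forall>X \<in> carrier_mat 2 2. trace (\<phi> X) = trace X)"

definition qubit_channel :: "(complex mat \<Rightarrow> complex mat) \<Rightarrow> bool" where
  "qubit_channel \<phi> \<longleftrightarrow> qubit_linear \<phi> \<and> completely_positive \<phi> \<and> trace_preserving \<phi>"

text \<open>Matrix units E_ab of M(2;C) and the 4x4 matrix of phi w.r.t. the basis
 E_00, E_01, E_10, E_11 (index c = 2a + b).\<close>
definition unit2 :: "nat \<Rightarrow> nat \<Rightarrow> complex mat" where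
  "unit2 a b = mat 2 2 (\<lambda>(i, j). if i = a \<and> j = b then 1 else 0)"

definition superop_matrix :: "(complex mat \<Rightarrow> complex mat) \<Rightarrow> complex mat" where
  "superop_matrix \<phi> = mat 4 4 (\<lambda>(r, c). \<phi> (unit2 (c div 2) (c mod 2)) $$ (r div 2, r mod 2))"

definition det_superop :: "(complex mat \<Rightarrow> complex mat) \<Rightarrow> complex" where
  "det_superop \<phi> = det (superop_matrix \<phi>)"

definition separable :: "nat \<Rightarrow> complex mat \<Rightarrow> bool" where
  "separable n \<sigma> \<longleftrightarrow> (\<exists>m (p :: nat \<Rightarrow> real) A B.
     (\<forall>k<m. p k \<ge> 0 \<and> is_state 2 (A k) \<and> is_state n (B k)) \<and> (\<Sum>k<m. p k) = 1 \<and>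
     \<sigma> = mat (2 * n) (2 * n) (\<lambda>ij. \<Sum>k<m. complex_of_real (p k) * kron (A k) (B k) $$ ij))"

definition entanglement_breaking :: "(complex mat \<Rightarrow> complex mat) \<Rightarrow> bool" where
  "entanglement_breaking \<phi> \<longleftrightarrow>
     (\<forall>n \<rho>. is_state (2 * n) \<rho> \<longrightarrow> separable n (tensor_id \<phi> n \<rho>))"

end

theory Submission
  imports Defs
begin

text \<open>If \<open>det \<phi> = 0\<close>, then \<open>\<phi>\<close> annihilates a nonzero matrix, and since \<open>\<phi>\<close> preserves
  traces and adjoints it annihilates a nonzero traceless Hermitian \<open>H\<close>; write
  \<open>H = (u u\<^sup>* - v v\<^sup>*) / 2k\<close> with \<open>u, v\<close> independent. With respect to the basis
  \<open>u + v, \<i>(u - v)\<close> of the input space the Choi matrix of \<open>\<phi>\<close> is a positive block matrix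
  \<open>[[A, B], [B, D]]\<close> with Hermitian blocks: the two off-diagonal blocks differ by a multiple of
  \<open>\<phi>(H) = 0\<close>. Such a block matrix splits as
  \<open>\<Sum>\<^sub>i [[1, b\<^sub>i], [b\<^sub>i, b\<^sub>i\<^sup>2]] \<otimes> Q\<^sub>i + [[0, 0], [0, 1]] \<otimes> R\<close> with real \<open>b\<^sub>i\<close> and
  positive \<open>Q\<^sub>i, R\<close>: the \<open>b\<^sub>i\<close> are the roots of \<open>det (B - t A)\<close> and \<open>R\<close> is the Schur
  complement \<open>D - B A\<^sup>-\<^sup>1 B\<close>. Undoing the change of basis puts \<open>\<phi>\<close> in measure-and-prepare
  form \<open>\<phi>(X) = \<Sum>\<^sub>k \<langle>f\<^sub>k, X f\<^sub>k\<rangle> Q\<^sub>k\<close>, and then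
  \<open>(\<phi> \<otimes> I)(\<rho>) = \<Sum>\<^sub>k Q\<^sub>k \<otimes> (f\<^sub>k\<^sup>* \<otimes> I) \<rho> (f\<^sub>k \<otimes> I)\<close> is separable.\<close>

section \<open>Positive semidefinite \<open>2 \<times> 2\<close> matrices\<close>

text \<open>Two-by-two matrices are handled as functions \<open>nat \<Rightarrow> nat \<Rightarrow> complex\<close> of which
  only the entries with indices 0 and 1 matter.\<close>

definition form2 :: "(nat \<Rightarrow> nat \<Rightarrow> complex) \<Rightarrow> (nat \<Rightarrow> complex) \<Rightarrow> (nat \<Rightarrow> complex) \<Rightarrow> complex" where
  "form2 M x y = cnj (x 0) * M 0 0 * y 0 + cnj (x 0) * M 0 1 * y 1
     + cnj (x 1) * M 1 0 * y 0 + cnj (x 1) * M 1 1 * y 1"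

definition hermitian2 :: "(nat \<Rightarrow> nat \<Rightarrow> complex) \<Rightarrow> bool" where
  "hermitian2 M \<longleftrightarrow> M 1 0 = cnj (M 0 1) \<and> Im (M 0 0) = 0 \<and> Im (M 1 1) = 0"

definition psd2 :: "(nat \<Rightarrow> nat \<Rightarrow> complex) \<Rightarrow> bool" where
  "psd2 M \<longleftrightarrow> hermitian2 M \<and> (\<forall>x. Im (form2 M x x) = 0 \<and> 0 \<le> Re (form2 M x x))"

definition det2 :: "(nat \<Rightarrow> nat \<Rightarrow> complex) \<Rightarrow> complex" where
  "det2 M = M 0 0 * M 1 1 - M 0 1 * M 1 0"

text \<open>The polarisation of \<open>det2\<close>: \<open>det2 (B - t A) = det2 B - t mixed_det2 A B + t\<^sup>2 det2 A\<close>.\<close>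
definition mixed_det2 :: "(nat \<Rightarrow> nat \<Rightarrow> complex) \<Rightarrow> (nat \<Rightarrow> nat \<Rightarrow> complex) \<Rightarrow> complex" where
  "mixed_det2 A B = A 0 0 * B 1 1 + A 1 1 * B 0 0 - A 0 1 * B 1 0 - A 1 0 * B 0 1"

definition e0 :: "nat \<Rightarrow> complex" where "e0 = (\<lambda>i. if i = 0 then 1 else 0)"
definition e1 :: "nat \<Rightarrow> complex" where "e1 = (\<lambda>i. if i = 1 then 1 else 0)"

lemma less_2_cases: "(i::nat) < 2 \<longleftrightarrow> i = 0 \<or> i = 1"
  by auto

lemma sum_lessThan_2: "(\<Sum>a<(2::nat). f a) = f 0 + f 1"
  by (simp add: numeral_2_eq_2)

lemma sum_lessThan_3: "(\<Sum>a<(3::nat). f a) = f 0 + f 1 + f 2"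
  by (simp add: numeral_3_eq_3 numeral_2_eq_2)

lemma sum_lessThan_4: "(\<Sum>a<(4::nat). f a) = f 0 + f 1 + f 2 + f 3"
  by (simp add: numeral_eq_Suc)

lemma cross_term_le:
  fixes a c u v m :: real
  assumes "0 \<le> a" "0 \<le> c" "0 \<le> u" "0 \<le> v" "0 \<le> m" "m\<^sup>2 \<le> a * c"
  shows "2 * u * v * m \<le> a * u\<^sup>2 + c * v\<^sup>2"
proof -
  have "(2 * u * v * m)\<^sup>2 = (4 * u\<^sup>2 * v\<^sup>2) * m\<^sup>2"
    by (simp add: power_mult_distrib)
  also have "\<dots> \<le> (4 * u\<^sup>2 * v\<^sup>2) * (a * c)"
    using assms(6) by (rule mult_left_mono) simp
  also have "\<dots> \<le> (a * u\<^sup>2 + c * v\<^sup>2)\<^sup>2"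
  proof -
    have "0 \<le> (a * u\<^sup>2 - c * v\<^sup>2)\<^sup>2"
      by simp
    thus ?thesis
      by (simp add: power2_eq_square algebra_simps)
  qed
  finally have "(2 * u * v * m)\<^sup>2 \<le> (a * u\<^sup>2 + c * v\<^sup>2)\<^sup>2" .
  moreover have "0 \<le> a * u\<^sup>2 + c * v\<^sup>2"
    using assms by simp
  ultimately show ?thesis
    by (rule power2_le_imp_le)
qed

lemma form2_basis:
  "form2 M e0 e0 = M 0 0" "form2 M e0 e1 = M 0 1" "form2 M e1 e0 = M 1 0" "form2 M e1 e1 = M 1 1"
  unfolding form2_def e0_def e1_def by simp_all

lemma form2_zero_left: "form2 M (\<lambda>i. 0) y = 0"
  and form2_zero_right: "form2 M x (\<lambda>i. 0) = 0"
  unfolding form2_def by simp_all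

lemma form2_add_scaled_left: "form2 M (\<lambda>i. x i + c * y i) z = form2 M x z + cnj c * form2 M y z"
  unfolding form2_def by (simp only: complex_cnj_add complex_cnj_mult) (simp add: ring_distribs ac_simps)

lemma form2_add_scaled_right: "form2 M z (\<lambda>i. x i + c * y i) = form2 M z x + c * form2 M z y"
  unfolding form2_def by (simp add: ring_distribs ac_simps)

lemma form2_scale_right: "form2 M z (\<lambda>i. c * y i) = c * form2 M z y"
  unfolding form2_def by (simp add: ring_distribs ac_simps)

lemma form2_scale_matrix: "form2 (\<lambda>i j. M i j * k) x y = k * form2 M x y"
  unfolding form2_def by (simp add: ring_distribs ac_simps)

lemma form2_diff_matrix: "form2 (\<lambda>i j. B i j - c * A i j) x y = form2 B x y - c * form2 A x y"
  unfolding form2_def by (simp add: ring_distribs ac_simps)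

lemma form2_cong:
  "M 0 0 = M' 0 0 \<Longrightarrow> M 0 1 = M' 0 1 \<Longrightarrow> M 1 0 = M' 1 0 \<Longrightarrow> M 1 1 = M' 1 1 \<Longrightarrow> form2 M x y = form2 M' x y"
  unfolding form2_def by simp

lemma hermitian2_cnj:
  assumes "hermitian2 M"
  shows "cnj (M 0 0) = M 0 0" "cnj (M 1 1) = M 1 1" "cnj (M 0 1) = M 1 0" "cnj (M 1 0) = M 0 1"
  using assms by (auto simp: hermitian2_def complex_eq_iff)

lemma hermitian2_real_diag:
  assumes "hermitian2 M"
  shows "M 0 0 = of_real (Re (M 0 0))" "M 1 1 = of_real (Re (M 1 1))"
  using assms by (auto simp: hermitian2_def complex_eq_iff)

lemma form2_swap:
  assumes "hermitian2 M"
  shows "form2 M y x = cnj (form2 M x y)"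
  using hermitian2_cnj[OF assms] unfolding form2_def by (simp add: algebra_simps)

lemma Im_form2_diag:
  assumes "hermitian2 M"
  shows "Im (form2 M x x) = 0"
  using arg_cong[OF form2_swap[OF assms, of x x], of Im] by simp

lemma psd2I:
  assumes "hermitian2 M" "\<And>x. 0 \<le> Re (form2 M x x)"
  shows "psd2 M"
  using assms Im_form2_diag unfolding psd2_def by blast

lemma psd2_diag_nonneg:
  assumes "psd2 M"
  shows "0 \<le> Re (M 0 0)" "0 \<le> Re (M 1 1)"
  using assms unfolding psd2_def by (metis form2_basis(1,4))+

lemma psd2_of_det_nonneg:
  assumes h: "hermitian2 M" and a: "0 \<le> Re (M 0 0)" and c: "0 \<le> Re (M 1 1)"
    and d: "(cmod (M 0 1))\<^sup>2 \<le> Re (M 0 0) * Re (M 1 1)"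
  shows "psd2 M"
proof (rule psd2I[OF h])
  fix x :: "nat \<Rightarrow> complex"
  define z where "z = cnj (x 0) * M 0 1 * x 1"
  have M00: "M 0 0 = of_real (Re (M 0 0))" and M11: "M 1 1 = of_real (Re (M 1 1))"
    using hermitian2_real_diag[OF h] .
  have "form2 M x x = M 0 0 * (x 0 * cnj (x 0)) + M 1 1 * (x 1 * cnj (x 1)) + (z + cnj z)"
    using h unfolding form2_def z_def hermitian2_def by (simp add: algebra_simps)
  also have "\<dots> = of_real (Re (M 0 0) * (cmod (x 0))\<^sup>2 + Re (M 1 1) * (cmod (x 1))\<^sup>2 + 2 * Re z)"
    by (subst M00, subst M11) (simp add: complex_add_cnj flip: complex_norm_square)
  finally have e: "form2 M x x = \<dots>" .
  have "\<bar>Re z\<bar> \<le> cmod z"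
    by (rule abs_Re_le_cmod)
  also have "cmod z = cmod (x 0) * cmod (x 1) * cmod (M 0 1)"
    unfolding z_def by (simp add: norm_mult)
  finally have "- Re z \<le> cmod (x 0) * cmod (x 1) * cmod (M 0 1)"
    by linarith
  moreover have "2 * cmod (x 0) * cmod (x 1) * cmod (M 0 1)
      \<le> Re (M 0 0) * (cmod (x 0))\<^sup>2 + Re (M 1 1) * (cmod (x 1))\<^sup>2"
    using cross_term_le[OF a c norm_ge_zero norm_ge_zero norm_ge_zero d] by simp
  ultimately show "0 \<le> Re (form2 M x x)"
    unfolding e by simp
qed

lemma psd2_scale:
  assumes "psd2 M" "0 \<le> s"
  shows "psd2 (\<lambda>i j. M i j * of_real s)"
  using assms unfolding psd2_def hermitian2_def form2_scale_matrix by simp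

lemma psd2_zero: "psd2 (\<lambda>i j. 0)"
  unfolding psd2_def hermitian2_def form2_def by simp

lemma psd2_trace_zero:
  assumes "psd2 M" "Re (M 0 0) + Re (M 1 1) = 0"
  shows "M 0 0 = 0 \<and> M 0 1 = 0 \<and> M 1 0 = 0 \<and> M 1 1 = 0"
proof -
  have h: "hermitian2 M" and pos: "\<And>x. 0 \<le> Re (form2 M x x)"
    using assms(1) unfolding psd2_def by auto
  have "Re (M 0 0) = 0" "Re (M 1 1) = 0"
    using psd2_diag_nonneg[OF assms(1)] assms(2) by linarith+
  hence d: "M 0 0 = 0" "M 1 1 = 0"
    using hermitian2_real_diag[OF h] by simp_all
  have m10: "M 1 0 = cnj (M 0 1)"
    using h unfolding hermitian2_def by simp
  define x :: "nat \<Rightarrow> complex" where "x = (\<lambda>i. if i = 0 then 1 else - cnj (M 0 1))"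
  have "form2 M x x = - 2 * (M 0 1 * cnj (M 0 1))"
    unfolding form2_def x_def d m10 by simp
  also have "\<dots> = of_real (- 2 * (cmod (M 0 1))\<^sup>2)"
    unfolding complex_norm_square[symmetric] by simp
  finally have "0 \<le> - 2 * (cmod (M 0 1))\<^sup>2"
    using pos[of x] by simp
  thus ?thesis
    using d m10 by simp
qed

lemma det2_hermitian:
  assumes "hermitian2 M"
  shows "det2 M = of_real (Re (M 0 0) * Re (M 1 1) - (cmod (M 0 1))\<^sup>2)"
proof -
  have "det2 M = M 0 0 * M 1 1 - M 0 1 * cnj (M 0 1)"
    using assms unfolding det2_def hermitian2_def by simp
  also have "\<dots> = of_real (Re (M 0 0) * Re (M 1 1)) - of_real ((cmod (M 0 1))\<^sup>2)"
    using assms unfolding hermitian2_def complex_norm_square by (simp add: complex_eq_iff)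
  finally show ?thesis
    by simp
qed

lemma det2_eq_0_of_left_kernel:
  assumes "form2 N x e0 = 0" "form2 N x e1 = 0" "x 0 \<noteq> 0 \<or> x 1 \<noteq> 0"
  shows "det2 N = 0"
proof -
  have k: "cnj (x 0) * N 0 0 + cnj (x 1) * N 1 0 = 0" "cnj (x 0) * N 0 1 + cnj (x 1) * N 1 1 = 0"
    using assms(1,2) unfolding form2_def e0_def e1_def by simp_all
  have "cnj (x 0) * det2 N
      = N 1 1 * (cnj (x 0) * N 0 0 + cnj (x 1) * N 1 0) - N 1 0 * (cnj (x 0) * N 0 1 + cnj (x 1) * N 1 1)"
    unfolding det2_def by (simp add: algebra_simps)
  also have "\<dots> = 0"
    unfolding k by simp
  finally have "cnj (x 0) * det2 N = 0" .
  moreover have "cnj (x 1) * det2 N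
      = N 0 0 * (cnj (x 0) * N 0 1 + cnj (x 1) * N 1 1) - N 0 1 * (cnj (x 0) * N 0 0 + cnj (x 1) * N 1 0)"
    unfolding det2_def by (simp add: algebra_simps)
  moreover have "\<dots> = 0"
    unfolding k by simp
  ultimately show ?thesis
    using assms(3) by (metis complex_cnj_zero_iff mult_eq_0_iff)
qed

lemma traceless_hermitian2_eq_0:
  assumes h: "hermitian2 N" and t: "Re (N 0 0) + Re (N 1 1) = 0" and d: "0 \<le> Re (det2 N)"
  shows "N 0 0 = 0 \<and> N 0 1 = 0 \<and> N 1 0 = 0 \<and> N 1 1 = 0"
proof -
  have "Re (N 1 1) = - Re (N 0 0)"
    using t by simp
  hence "Re (det2 N) = - ((Re (N 0 0))\<^sup>2 + (cmod (N 0 1))\<^sup>2)"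
    unfolding det2_hermitian[OF h] by (simp add: power2_eq_square)
  with d have "(Re (N 0 0))\<^sup>2 + (cmod (N 0 1))\<^sup>2 \<le> 0"
    by simp
  hence "Re (N 0 0) = 0" "cmod (N 0 1) = 0"
    unfolding sum_power2_le_zero_iff by simp_all
  thus ?thesis
    using h t unfolding hermitian2_def by (auto simp: complex_eq_iff)
qed

lemma psd2_of_trace_det_nonneg:
  assumes h: "hermitian2 M" and t: "0 \<le> Re (M 0 0) + Re (M 1 1)" and d: "0 \<le> Re (det2 M)"
  shows "psd2 M"
proof -
  have d': "(cmod (M 0 1))\<^sup>2 \<le> Re (M 0 0) * Re (M 1 1)"
    using d unfolding det2_hermitian[OF h] by simp
  hence "0 \<le> Re (M 0 0) * Re (M 1 1)"
    by (meson order_trans zero_le_power2)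
  with t have "0 \<le> Re (M 0 0) \<and> 0 \<le> Re (M 1 1)"
    by (auto simp: zero_le_mult_iff)
  thus ?thesis
    using psd2_of_det_nonneg[OF h _ _ d'] by blast
qed

lemma psd2_isotropic_of_not_definite:
  assumes "psd2 A" "\<not> (0 < Re (A 0 0) \<and> 0 < Re (det2 A))"
  obtains x where "x 0 \<noteq> 0 \<or> x 1 \<noteq> 0" "form2 A x x = 0"
proof (cases "Re (A 0 0) = 0")
  case True
  hence "A 0 0 = 0"
    using assms(1) hermitian2_real_diag[of A] unfolding psd2_def by auto
  thus ?thesis
    using that[of e0] unfolding form2_basis by (simp add: e0_def)
next
  case False
  have h: "hermitian2 A"
    using assms(1) unfolding psd2_def by simp
  hence ap: "0 < Re (A 0 0)"
    using False psd2_diag_nonneg[OF assms(1)] by simp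
  define x :: "nat \<Rightarrow> complex" where "x = (\<lambda>i. if i = 0 then - A 0 1 else of_real (Re (A 0 0)))"
  have "form2 A x x = of_real (Re (A 0 0)) * det2 A"
    using hermitian2_cnj[OF h] unfolding form2_def det2_def x_def
    by (subst (1 2 3) hermitian2_real_diag(1)[OF h]) (simp add: algebra_simps)
  also have "\<dots> = of_real (Re (A 0 0) * Re (det2 A))"
    unfolding det2_hermitian[OF h] by simp
  finally have e: "form2 A x x = of_real (Re (A 0 0) * Re (det2 A))" .
  have "0 \<le> Re (form2 A x x)"
    using assms(1) unfolding psd2_def by blast
  hence "Re (det2 A) = 0"
    using assms(2) ap unfolding e by (simp add: zero_le_mult_iff)
  moreover have "x 1 \<noteq> 0"
    unfolding x_def using ap by simp
  ultimately show ?thesis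
    using that[of x] e by simp
qed

lemma quadratic_roots_around:
  fixes a b c x :: real
  assumes a: "0 < a" and neg: "a * x\<^sup>2 + b * x + c < 0"
  obtains t1 t2 where "t1 < x" "x < t2" "a * (t1 + t2) = - b" "a * (t1 * t2) = c"
proof -
  define D where "D = b\<^sup>2 - 4 * a * c"
  have "4 * a * (a * x\<^sup>2 + b * x + c) = (2 * a * x + b)\<^sup>2 - D"
    unfolding D_def by (simp add: power2_eq_square algebra_simps)
  moreover have "4 * a * (a * x\<^sup>2 + b * x + c) < 0"
    using a neg by (simp add: mult_pos_neg)
  ultimately have D: "0 < D"
    by (smt (verit) zero_le_power2)
  define s where "s = sqrt D"
  have s: "0 < s" "s * s = D"
    unfolding s_def using D by simp_all
  define t1 where "t1 = (- b - s) / (2 * a)"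
  define t2 where "t2 = (- b + s) / (2 * a)"
  have sum: "a * (t1 + t2) = - b"
    unfolding t1_def t2_def using a by (simp add: field_simps)
  have prod: "a * (t1 * t2) = c"
  proof -
    have "a * (t1 * t2) = (b * b - s * s) / (4 * a)"
      unfolding t1_def t2_def using a by (simp add: field_simps)
    thus ?thesis
      unfolding s D_def using a by (simp add: field_simps power2_eq_square)
  qed
  have "a * ((x - t1) * (x - t2)) = a * x\<^sup>2 - a * (t1 + t2) * x + a * (t1 * t2)"
    by (simp add: power2_eq_square algebra_simps)
  also have "\<dots> = a * x\<^sup>2 + b * x + c"
    unfolding sum prod by simp
  finally have "a * ((x - t1) * (x - t2)) = a * x\<^sup>2 + b * x + c" .
  hence "(x - t1) * (x - t2) < 0"
    using neg a by (smt (verit) mult_nonneg_nonneg)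
  moreover have "t1 < t2"
    unfolding t1_def t2_def using s a by (simp add: divide_strict_right_mono)
  ultimately have "t1 < x" "x < t2"
    by (auto simp: mult_less_0_iff)
  thus ?thesis
    using that sum prod by blast
qed

section \<open>Separable decomposition of positive block matrices\<close>

text \<open>The sesquilinear form of the \<open>4 \<times> 4\<close> block matrix \<open>[[A, B], [B, D]]\<close>.\<close>
definition block_form :: "(nat \<Rightarrow> nat \<Rightarrow> complex) \<Rightarrow> (nat \<Rightarrow> nat \<Rightarrow> complex) \<Rightarrow> (nat \<Rightarrow> nat \<Rightarrow> complex)
    \<Rightarrow> (nat \<Rightarrow> complex) \<Rightarrow> (nat \<Rightarrow> complex) \<Rightarrow> (nat \<Rightarrow> complex) \<Rightarrow> (nat \<Rightarrow> complex) \<Rightarrow> complex" where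
  "block_form A B D x1 x2 y1 y2 = form2 A x1 y1 + form2 B x1 y2 + form2 B x2 y1 + form2 D x2 y2"

definition psd_blocks :: "(nat \<Rightarrow> nat \<Rightarrow> complex) \<Rightarrow> (nat \<Rightarrow> nat \<Rightarrow> complex) \<Rightarrow> (nat \<Rightarrow> nat \<Rightarrow> complex) \<Rightarrow> bool" where
  "psd_blocks A B D \<longleftrightarrow> hermitian2 A \<and> hermitian2 B \<and> hermitian2 D \<and>
     (\<forall>x1 x2. 0 \<le> Re (block_form A B D x1 x2 x1 x2))"

text \<open>\<open>[[A, B], [B, D]] = \<Sum>\<^sub>i [[1, b\<^sub>i], [b\<^sub>i, b\<^sub>i\<^sup>2]] \<otimes> Q\<^sub>i + [[0, 0], [0, 1]] \<otimes> R\<close> with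
  real \<open>b\<^sub>i\<close> and positive semidefinite \<open>Q\<^sub>1, Q\<^sub>2, R\<close>: a separable decomposition whose first
  factors are real rank-one projections.\<close>
definition separable_blocks :: "(nat \<Rightarrow> nat \<Rightarrow> complex) \<Rightarrow> (nat \<Rightarrow> nat \<Rightarrow> complex) \<Rightarrow> (nat \<Rightarrow> nat \<Rightarrow> complex) \<Rightarrow> bool" where
  "separable_blocks A B D \<longleftrightarrow> (\<exists>b1 b2 :: real. \<exists>Q1 Q2 R. psd2 Q1 \<and> psd2 Q2 \<and> psd2 R \<and>
     (\<forall>i<2. \<forall>j<2. A i j = Q1 i j + Q2 i j \<and> B i j = of_real b1 * Q1 i j + of_real b2 * Q2 i j
        \<and> D i j = of_real b1 * of_real b1 * Q1 i j + of_real b2 * of_real b2 * Q2 i j + R i j))"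

lemma block_form_add_scaled_left:
  "block_form A B D (\<lambda>i. x1 i + c * y1 i) (\<lambda>i. x2 i + c * y2 i) u1 u2
   = block_form A B D x1 x2 u1 u2 + cnj c * block_form A B D y1 y2 u1 u2"
  unfolding block_form_def form2_add_scaled_left by (simp add: ring_distribs ac_simps)

lemma block_form_add_scaled_right:
  "block_form A B D u1 u2 (\<lambda>i. x1 i + c * y1 i) (\<lambda>i. x2 i + c * y2 i)
   = block_form A B D u1 u2 x1 x2 + c * block_form A B D u1 u2 y1 y2"
  unfolding block_form_def form2_add_scaled_right by (simp add: ring_distribs ac_simps)

lemma block_form_scale_right:
  "block_form A B D u1 u2 (\<lambda>i. c * y1 i) (\<lambda>i. c * y2 i) = c * block_form A B D u1 u2 y1 y2"
  unfolding block_form_def form2_scale_right by (simp add: ring_distribs ac_simps)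

lemma block_form_swap:
  assumes "hermitian2 A" "hermitian2 B" "hermitian2 D"
  shows "block_form A B D y1 y2 x1 x2 = cnj (block_form A B D x1 x2 y1 y2)"
  unfolding block_form_def form2_swap[OF assms(1), of y1] form2_swap[OF assms(2), of y1]
    form2_swap[OF assms(2), of y2] form2_swap[OF assms(3), of y2] by simp

lemma linear_coeff_eq_0_of_nonneg:
  fixes a b :: real
  assumes "\<forall>t. 0 \<le> t * t * a + t * b"
  shows "b = 0"
proof (rule ccontr)
  assume b: "b \<noteq> 0"
  define s where "s = 1 / (\<bar>a\<bar> + 1)"
  have s0: "0 < s"
    unfolding s_def by simp
  have "s * \<bar>a\<bar> < 1"
    unfolding s_def by simp
  moreover have "s * a \<le> s * \<bar>a\<bar>"
    using s0 by simp
  ultimately have sa: "s * a - 1 < 0"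
    by linarith
  have "0 < b\<^sup>2 * s"
    using b s0 by simp
  hence "b\<^sup>2 * s * (s * a - 1) < 0"
    using sa by (simp add: mult_pos_neg)
  moreover have "(- b * s) * (- b * s) * a + (- b * s) * b = b\<^sup>2 * s * (s * a - 1)"
    by (simp add: power2_eq_square algebra_simps)
  ultimately show False
    using assms by (metis not_le)
qed

text \<open>At \<open>x + t u\<close> the nonnegative form is a quadratic in \<open>t\<close> without constant term, so its
  linear coefficient \<open>2 Re (block_form x u)\<close> vanishes.\<close>
lemma block_form_radical:
  assumes psd: "psd_blocks A B D" and z: "block_form A B D x1 x2 x1 x2 = 0"
  shows "block_form A B D x1 x2 y1 y2 = 0"
proof -
  have h: "hermitian2 A" "hermitian2 B" "hermitian2 D"
    and pos: "\<And>x1 x2. 0 \<le> Re (block_form A B D x1 x2 x1 x2)"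
    using psd unfolding psd_blocks_def by auto
  have re0: "Re (block_form A B D x1 x2 u1 u2) = 0" for u1 u2
  proof -
    have "0 \<le> t * t * Re (block_form A B D u1 u2 u1 u2) + t * (2 * Re (block_form A B D x1 x2 u1 u2))"
      for t :: real
    proof -
      have e: "block_form A B D (\<lambda>i. x1 i + of_real t * u1 i) (\<lambda>i. x2 i + of_real t * u2 i)
                 (\<lambda>i. x1 i + of_real t * u1 i) (\<lambda>i. x2 i + of_real t * u2 i)
         = block_form A B D x1 x2 x1 x2 + of_real t * block_form A B D x1 x2 u1 u2
           + of_real t * block_form A B D u1 u2 x1 x2 + of_real t * of_real t * block_form A B D u1 u2 u1 u2"
        unfolding block_form_add_scaled_left block_form_add_scaled_right by (simp add: algebra_simps)
      have "0 \<le> Re (block_form A B D (\<lambda>i. x1 i + of_real t * u1 i) (\<lambda>i. x2 i + of_real t * u2 i)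
                 (\<lambda>i. x1 i + of_real t * u1 i) (\<lambda>i. x2 i + of_real t * u2 i))"
        by (rule pos)
      thus ?thesis
        unfolding e block_form_swap[OF h, of u1 u2 x1 x2] z by (simp add: algebra_simps)
    qed
    from linear_coeff_eq_0_of_nonneg[OF allI[OF this]] show ?thesis
      by simp
  qed
  have "Im (block_form A B D x1 x2 y1 y2) = - Re (block_form A B D x1 x2 (\<lambda>i. \<i> * y1 i) (\<lambda>i. \<i> * y2 i))"
    unfolding block_form_scale_right by simp
  thus ?thesis
    using re0 by (simp add: complex_eq_iff)
qed

lemma psd_blocks_diag:
  assumes "psd_blocks A B D"
  shows "psd2 A" "psd2 D"
proof -
  have h: "hermitian2 A" "hermitian2 D" and pos: "\<And>x1 x2. 0 \<le> Re (block_form A B D x1 x2 x1 x2)"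
    using assms unfolding psd_blocks_def by auto
  show "psd2 A"
    using h(1) pos[of _ "\<lambda>i. 0"] by (intro psd2I) (simp_all add: block_form_def form2_zero_left form2_zero_right)
  show "psd2 D"
    using h(2) pos[of "\<lambda>i. 0"] by (intro psd2I) (simp_all add: block_form_def form2_zero_left form2_zero_right)
qed

lemma separable_blocks_of_proportional:
  assumes psd: "psd_blocks A B D" and prop_B: "\<forall>i<2. \<forall>j<2. B i j = of_real c * A i j"
  shows "separable_blocks A B D"
proof -
  have hD: "hermitian2 D" and hA: "hermitian2 A" and pos: "\<And>x1 x2. 0 \<le> Re (block_form A B D x1 x2 x1 x2)"
    using psd unfolding psd_blocks_def by auto
  define R where "R = (\<lambda>i j. D i j - of_real c * of_real c * A i j)"
  have "form2 R y y = block_form A B D (\<lambda>i. - of_real c * y i) y (\<lambda>i. - of_real c * y i) y" for y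
    using prop_B unfolding block_form_def form2_def R_def
    by (simp only: complex_cnj_mult complex_cnj_minus complex_cnj_complex_of_real less_2_cases)
      (simp add: algebra_simps)
  hence "psd2 R"
    using hA hD pos unfolding R_def by (intro psd2I) (simp_all add: hermitian2_def)
  show ?thesis
    unfolding separable_blocks_def
  proof (rule exI[of _ c], rule exI[of _ c], rule exI[of _ A], rule exI[of _ "\<lambda>i j. 0"], rule exI[of _ R])
    show "psd2 A \<and> psd2 (\<lambda>i j. 0) \<and> psd2 R \<and> (\<forall>i<2. \<forall>j<2. A i j = A i j + 0 \<and>
        B i j = of_real c * A i j + of_real c * 0 \<and> D i j = of_real c * of_real c * A i j + of_real c * of_real c * 0 + R i j)"
      using psd_blocks_diag(1)[OF psd] psd2_zero \<open>psd2 R\<close> prop_B unfolding R_def by auto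
  qed
qed

lemma det2_pencil: "det2 (\<lambda>i j. B i j - t * A i j) = det2 B - t * mixed_det2 A B + t\<^sup>2 * det2 A"
  unfolding det2_def mixed_det2_def by (simp add: power2_eq_square algebra_simps)

lemma det2_hermitian_real:
  assumes "hermitian2 M"
  shows "det2 M = of_real (Re (det2 M))"
  unfolding det2_hermitian[OF assms] by simp

lemma mixed_det2_hermitian:
  assumes "hermitian2 A" "hermitian2 B"
  shows "mixed_det2 A B = of_real (Re (mixed_det2 A B))"
  using assms unfolding mixed_det2_def hermitian2_def by (simp add: complex_eq_iff algebra_simps)

text \<open>The roots \<open>t\<^sub>1 < t\<^sub>2\<close> of \<open>det (B - t A)\<close> for positive definite \<open>A\<close>: between them
  \<open>B - t A\<close> is indefinite, at them it is semidefinite.\<close>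
lemma psd2_pencil_roots:
  assumes hA: "hermitian2 A" and hB: "hermitian2 B"
    and pd: "0 < Re (A 0 0)" "0 < Re (det2 A)"
    and indef: "Re (det2 (\<lambda>i j. B i j - of_real c * A i j)) < 0"
    and tr: "c * (Re (A 0 0) + Re (A 1 1)) = Re (B 0 0) + Re (B 1 1)"
  obtains t1 t2 where "t1 < t2"
    "psd2 (\<lambda>i j. B i j - of_real t1 * A i j)" "psd2 (\<lambda>i j. of_real t2 * A i j - B i j)"
    "of_real (t1 + t2) * det2 A = mixed_det2 A B" "of_real (t1 * t2) * det2 A = det2 B"
proof -
  define a b d where "a = Re (det2 A)" and "b = Re (mixed_det2 A B)" and "d = Re (det2 B)"
  have dA: "det2 A = of_real a" and dB: "det2 B = of_real d" and mix: "mixed_det2 A B = of_real b"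
    unfolding a_def b_def d_def det2_hermitian[OF hA] det2_hermitian[OF hB]
    using mixed_det2_hermitian[OF hA hB] by simp_all
  have p: "Re (det2 (\<lambda>i j. B i j - of_real t * A i j)) = a * t\<^sup>2 + (- b) * t + d" for t
    unfolding det2_pencil dA dB mix by simp
  obtain t1 t2 where t: "t1 < c" "c < t2" and sum: "a * (t1 + t2) = b" and prod: "a * (t1 * t2) = d"
    using quadratic_roots_around[of a c "- b" d] pd(2) indef unfolding p a_def by auto
  have root: "Re (det2 (\<lambda>i j. B i j - of_real t * A i j)) = 0" if "t = t1 \<or> t = t2" for t
    using that unfolding p sum[symmetric] prod[symmetric] by (auto simp: power2_eq_square algebra_simps)
  have "0 < Re (A 0 0) * Re (A 1 1)"
    using pd(2) unfolding det2_hermitian[OF hA] by (smt (verit) zero_le_power2 Re_complex_of_real)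
  hence trA: "0 < Re (A 0 0) + Re (A 1 1)"
    using pd(1) by (simp add: zero_less_mult_iff)
  show ?thesis
  proof (rule that)
    show "t1 < t2"
      using t by simp
    have "Re (B 0 0 - of_real t1 * A 0 0) + Re (B 1 1 - of_real t1 * A 1 1) = (c - t1) * (Re (A 0 0) + Re (A 1 1))"
      using tr by (simp add: algebra_simps)
    thus "psd2 (\<lambda>i j. B i j - of_real t1 * A i j)"
      using hA hB root[of t1] t trA
      by (intro psd2_of_trace_det_nonneg) (simp_all add: hermitian2_def)
    have "Re (of_real t2 * A 0 0 - B 0 0) + Re (of_real t2 * A 1 1 - B 1 1) = (t2 - c) * (Re (A 0 0) + Re (A 1 1))"
      using tr by (simp add: algebra_simps)
    moreover have "det2 (\<lambda>i j. of_real t2 * A i j - B i j) = det2 (\<lambda>i j. B i j - of_real t2 * A i j)"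
      unfolding det2_def by (simp add: algebra_simps)
    ultimately show "psd2 (\<lambda>i j. of_real t2 * A i j - B i j)"
      using hA hB root[of t2] t trA
      by (intro psd2_of_trace_det_nonneg) (simp_all add: hermitian2_def)
    show "of_real (t1 + t2) * det2 A = mixed_det2 A B" "of_real (t1 * t2) * det2 A = det2 B"
      unfolding dA mix dB sum[symmetric] prod[symmetric] by (simp_all add: mult.commute)
  qed
qed

text \<open>Evaluates the \<open>2 \<times> 2\<close> identity \<open>B adj(A) B = mixed_det2 A B \<cdot> B - det2 B \<cdot> A\<close> at \<open>y\<close>.\<close>
lemma adjugate_sandwich:
  assumes "hermitian2 B" and w: "w = (\<lambda>i. B i 0 * y 0 + B i 1 * y 1)"
  shows "(A 1 1 * cnj (w 0) - A 1 0 * cnj (w 1)) * w 0 + (A 0 0 * cnj (w 1) - A 0 1 * cnj (w 0)) * w 1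
       = mixed_det2 A B * form2 B y y - det2 B * form2 A y y"
proof -
  have cw: "cnj (w 0) = B 0 0 * cnj (y 0) + B 1 0 * cnj (y 1)" "cnj (w 1) = B 0 1 * cnj (y 0) + B 1 1 * cnj (y 1)"
    unfolding w using hermitian2_cnj[OF assms(1)] by simp_all
  show ?thesis
    unfolding cw unfolding w mixed_det2_def det2_def form2_def by (simp add: algebra_simps)
qed

text \<open>\<open>A\<^sup>-\<^sup>1 w\<close> by Cramer's rule.\<close>
definition solve2 :: "(nat \<Rightarrow> nat \<Rightarrow> complex) \<Rightarrow> (nat \<Rightarrow> complex) \<Rightarrow> nat \<Rightarrow> complex" where
  "solve2 A w i = (if i = 0 then A 1 1 * w 0 - A 0 1 * w 1 else A 0 0 * w 1 - A 1 0 * w 0) / det2 A"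

lemma solve2:
  assumes inv: "det2 A \<noteq> 0"
  shows "A 0 0 * solve2 A w 0 + A 0 1 * solve2 A w 1 = w 0" "A 1 0 * solve2 A w 0 + A 1 1 * solve2 A w 1 = w 1"
proof -
  have dx: "det2 A * solve2 A w 0 = A 1 1 * w 0 - A 0 1 * w 1" "det2 A * solve2 A w 1 = A 0 0 * w 1 - A 1 0 * w 0"
    unfolding solve2_def using inv by simp_all
  have "det2 A * (A 0 0 * solve2 A w 0 + A 0 1 * solve2 A w 1)
      = A 0 0 * (det2 A * solve2 A w 0) + A 0 1 * (det2 A * solve2 A w 1)"
    by (simp add: algebra_simps)
  also have "\<dots> = det2 A * w 0"
    unfolding dx unfolding det2_def by (simp add: algebra_simps)
  finally show "A 0 0 * solve2 A w 0 + A 0 1 * solve2 A w 1 = w 0"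
    using mult_left_cancel[OF inv] by blast
  have "det2 A * (A 1 0 * solve2 A w 0 + A 1 1 * solve2 A w 1)
      = A 1 0 * (det2 A * solve2 A w 0) + A 1 1 * (det2 A * solve2 A w 1)"
    by (simp add: algebra_simps)
  also have "\<dots> = det2 A * w 1"
    unfolding dx unfolding det2_def by (simp add: algebra_simps)
  finally show "A 1 0 * solve2 A w 0 + A 1 1 * solve2 A w 1 = w 1"
    using mult_left_cancel[OF inv] by blast
qed

lemma form2_solve2:
  assumes hA: "hermitian2 A" and hB: "hermitian2 B" and inv: "det2 A \<noteq> 0"
    and w: "w = (\<lambda>i. B i 0 * y 0 + B i 1 * y 1)"
  shows "form2 A (solve2 A w) (solve2 A w) = form2 B (solve2 A w) y"
    and "form2 A (solve2 A w) (solve2 A w) = (mixed_det2 A B * form2 B y y - det2 B * form2 A y y) / det2 A"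
proof -
  let ?x = "solve2 A w"
  have Bxy: "form2 B ?x y = cnj (?x 0) * w 0 + cnj (?x 1) * w 1"
    unfolding form2_def w by (simp add: algebra_simps)
  have "form2 A ?x ?x = cnj (?x 0) * (A 0 0 * ?x 0 + A 0 1 * ?x 1) + cnj (?x 1) * (A 1 0 * ?x 0 + A 1 1 * ?x 1)"
    unfolding form2_def by (simp add: algebra_simps)
  thus Axx: "form2 A ?x ?x = form2 B ?x y"
    unfolding solve2[OF inv] Bxy .
  have "cnj (det2 A) = det2 A"
    unfolding det2_hermitian[OF hA] by simp
  hence "cnj (?x 0) = (A 1 1 * cnj (w 0) - A 1 0 * cnj (w 1)) / det2 A"
    "cnj (?x 1) = (A 0 0 * cnj (w 1) - A 0 1 * cnj (w 0)) / det2 A"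
    unfolding solve2_def using hermitian2_cnj[OF hA] by simp_all
  hence "form2 B ?x y
      = ((A 1 1 * cnj (w 0) - A 1 0 * cnj (w 1)) * w 0 + (A 0 0 * cnj (w 1) - A 0 1 * cnj (w 0)) * w 1) / det2 A"
    unfolding Bxy by (simp add: add_divide_distrib)
  thus "form2 A ?x ?x = (mixed_det2 A B * form2 B y y - det2 B * form2 A y y) / det2 A"
    unfolding Axx adjugate_sandwich[OF hB w] .
qed

lemma form2_uminus: "form2 M (\<lambda>i. - x i) y = - form2 M x y" "form2 M x (\<lambda>i. - y i) = - form2 M x y"
  unfolding form2_def by simp_all

text \<open>The Schur complement \<open>D - B A\<^sup>-\<^sup>1 B\<close>: evaluate the block form at \<open>(- A\<^sup>-\<^sup>1 B y, y)\<close>.\<close>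
lemma psd2_schur_complement:
  assumes psd: "psd_blocks A B D" and inv: "det2 A \<noteq> 0"
  shows "psd2 (\<lambda>i j. D i j - mixed_det2 A B / det2 A * B i j + det2 B / det2 A * A i j)"
    (is "psd2 ?R")
proof (rule psd2I)
  have h: "hermitian2 A" "hermitian2 B" "hermitian2 D"
    and pos: "\<And>x1 x2. 0 \<le> Re (block_form A B D x1 x2 x1 x2)"
    using psd unfolding psd_blocks_def by auto
  have "mixed_det2 A B / det2 A = of_real (Re (mixed_det2 A B) / Re (det2 A))"
    "det2 B / det2 A = of_real (Re (det2 B) / Re (det2 A))"
    by (simp_all only: of_real_divide
        flip: mixed_det2_hermitian[OF h(1,2)] det2_hermitian_real[OF h(1)] det2_hermitian_real[OF h(2)])
  thus "hermitian2 ?R"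
    using h unfolding hermitian2_def by simp
  fix y :: "nat \<Rightarrow> complex"
  define w where "w = (\<lambda>i::nat. B i 0 * y 0 + B i 1 * y 1)"
  let ?x = "solve2 A w"
  have "cnj (form2 A ?x ?x) = form2 A ?x ?x"
    using form2_swap[OF h(1), of ?x ?x] by simp
  moreover have "form2 B y ?x = cnj (form2 B ?x y)"
    by (rule form2_swap[OF h(2)])
  ultimately have "block_form A B D (\<lambda>i. - ?x i) y (\<lambda>i. - ?x i) y = form2 D y y - form2 A ?x ?x"
    unfolding block_form_def form2_uminus form2_solve2(1)[OF h(1,2) inv w_def, symmetric] by simp
  also have "\<dots> = form2 D y y - (mixed_det2 A B * form2 B y y - det2 B * form2 A y y) / det2 A"
    unfolding form2_solve2(2)[OF h(1,2) inv w_def] ..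
  also have "\<dots> = form2 ?R y y"
    using inv unfolding form2_def by (simp add: field_simps)
  finally show "0 \<le> Re (form2 ?R y y)"
    using pos by metis
qed

lemma separable_blocks_of_definite:
  assumes psd: "psd_blocks A B D"
    and pd: "0 < Re (A 0 0)" "0 < Re (det2 A)"
    and indef: "Re (det2 (\<lambda>i j. B i j - of_real c * A i j)) < 0"
    and tr: "c * (Re (A 0 0) + Re (A 1 1)) = Re (B 0 0) + Re (B 1 1)"
  shows "separable_blocks A B D"
proof -
  have h: "hermitian2 A" "hermitian2 B"
    using psd unfolding psd_blocks_def by auto
  obtain t1 t2 where t12: "t1 < t2"
    and psd_low: "psd2 (\<lambda>i j. B i j - of_real t1 * A i j)"
    and psd_high: "psd2 (\<lambda>i j. of_real t2 * A i j - B i j)"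
    and sum: "of_real (t1 + t2) * det2 A = mixed_det2 A B"
    and prod: "of_real (t1 * t2) * det2 A = det2 B"
    using psd2_pencil_roots[OF h pd indef tr] .
  have dA: "det2 A \<noteq> 0"
    using pd(2) by auto
  define K where "K = 1 / (t2 - t1)"
  have "t2 * K - t1 * K = (t2 - t1) * K"
    by (simp add: algebra_simps)
  hence "t2 * K - t1 * K = 1"
    unfolding K_def using t12 by simp
  hence K: "0 \<le> K" "of_real t2 * of_real K - of_real t1 * of_real K = (1::complex)"
    unfolding K_def using t12 by (simp, metis of_real_1 of_real_diff of_real_mult)
  define Q1 where "Q1 = (\<lambda>i j. (of_real t2 * A i j - B i j) * of_real K)"
  define Q2 where "Q2 = (\<lambda>i j. (B i j - of_real t1 * A i j) * of_real K)"
  define R where "R = (\<lambda>i j. D i j - of_real (t1 + t2) * B i j + of_real (t1 * t2) * A i j)"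
  have "psd2 Q1" "psd2 Q2"
    unfolding Q1_def Q2_def using psd2_scale psd_low psd_high K(1) by blast+
  moreover have "psd2 R"
    using psd2_schur_complement[OF psd dA] dA
    unfolding R_def sum[symmetric] prod[symmetric] by simp
  moreover have "A i j = Q1 i j + Q2 i j" "B i j = of_real t1 * Q1 i j + of_real t2 * Q2 i j"
    "D i j = of_real t1 * of_real t1 * Q1 i j + of_real t2 * of_real t2 * Q2 i j + R i j" for i j
  proof -
    have "Q1 i j + Q2 i j = A i j * (of_real t2 * of_real K - of_real t1 * of_real K)"
      "of_real t1 * Q1 i j + of_real t2 * Q2 i j = B i j * (of_real t2 * of_real K - of_real t1 * of_real K)"
      "of_real t1 * of_real t1 * Q1 i j + of_real t2 * of_real t2 * Q2 i j
         = (of_real t2 * of_real K - of_real t1 * of_real K) * ((of_real t1 + of_real t2) * B i j - of_real t1 * of_real t2 * A i j)"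
      unfolding Q1_def Q2_def by (simp_all add: algebra_simps)
    thus "A i j = Q1 i j + Q2 i j" "B i j = of_real t1 * Q1 i j + of_real t2 * Q2 i j"
      "D i j = of_real t1 * of_real t1 * Q1 i j + of_real t2 * of_real t2 * Q2 i j + R i j"
      unfolding K(2) R_def by simp_all
  qed
  ultimately show ?thesis
    unfolding separable_blocks_def by blast
qed

lemma psd_blocks_radical:
  assumes psd: "psd_blocks A B D" and x: "form2 A x x = 0"
  shows "form2 A x y = 0" "form2 B x y = 0"
proof -
  have "block_form A B D x (\<lambda>i. 0) y1 y2 = 0" for y1 y2
    using x block_form_radical[OF psd, of x "\<lambda>i. 0"]
    by (simp add: block_form_def form2_zero_left form2_zero_right)
  from this[of y "\<lambda>i. 0"] this[of "\<lambda>i. 0" y] show "form2 A x y = 0" "form2 B x y = 0"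
    by (simp_all add: block_form_def form2_zero_left form2_zero_right)
qed

lemma separable_blocks_of_trace_zero:
  assumes psd: "psd_blocks A B D" and tr: "Re (A 0 0) + Re (A 1 1) = 0"
  shows "separable_blocks A B D"
proof (rule separable_blocks_of_proportional[OF psd])
  have "A 0 0 = 0" "A 1 1 = 0"
    using psd2_trace_zero[OF psd_blocks_diag(1)[OF psd] tr] by simp_all
  hence "form2 B e0 y = 0" "form2 B e1 y = 0" for y
    using psd_blocks_radical(2)[OF psd] form2_basis(1,4) by metis+
  hence "B 0 0 = 0" "B 0 1 = 0" "B 1 0 = 0" "B 1 1 = 0"
    using form2_basis[of B] by metis+
  thus "\<forall>i<2. \<forall>j<2. B i j = of_real 0 * A i j"
    by (auto simp: less_2_cases)
qed

text \<open>Subtracting the multiple \<open>c A\<close> of \<open>A\<close> with the trace of \<open>B\<close> leaves a traceless \<open>N\<close>.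
  Either \<open>det N \<ge> 0\<close>, whence \<open>N = 0\<close>; or \<open>A\<close> is definite and \<open>B - c A\<close> indefinite; or \<open>A\<close> has
  an isotropic vector, which lies in the kernel of \<open>N\<close>, so again \<open>det N = 0\<close>.\<close>
lemma separable_blocks_of_psd:
  assumes psd: "psd_blocks A B D"
  shows "separable_blocks A B D"
proof (cases "Re (A 0 0) + Re (A 1 1) = 0")
  case True
  thus ?thesis
    by (rule separable_blocks_of_trace_zero[OF psd])
next
  case False
  have hB: "hermitian2 B" and pA: "psd2 A"
    using psd psd_blocks_diag[OF psd] unfolding psd_blocks_def by auto
  hence trA: "0 < Re (A 0 0) + Re (A 1 1)"
    using False psd2_diag_nonneg[OF pA] by linarith
  define c where "c = (Re (B 0 0) + Re (B 1 1)) / (Re (A 0 0) + Re (A 1 1))"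
  have tr: "c * (Re (A 0 0) + Re (A 1 1)) = Re (B 0 0) + Re (B 1 1)"
    unfolding c_def using trA by simp
  define N where "N = (\<lambda>i j. B i j - of_real c * A i j)"
  have hN: "hermitian2 N"
    using hB pA unfolding psd2_def hermitian2_def N_def by simp
  have trN: "Re (N 0 0) + Re (N 1 1) = 0"
    unfolding N_def using tr by (simp add: algebra_simps)
  have proportional: "separable_blocks A B D" if "0 \<le> Re (det2 N)"
  proof (rule separable_blocks_of_proportional[OF psd])
    show "\<forall>i<2. \<forall>j<2. B i j = of_real c * A i j"
      using traceless_hermitian2_eq_0[OF hN trN that] unfolding N_def by (auto simp: less_2_cases)
  qed
  show ?thesis
  proof (cases "0 < Re (A 0 0) \<and> 0 < Re (det2 A)")
    case True
    thus ?thesis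
      using separable_blocks_of_definite[OF psd _ _ _ tr] proportional unfolding N_def by force
  next
    case False
    then obtain x where "x 0 \<noteq> 0 \<or> x 1 \<noteq> 0" "form2 A x x = 0"
      using psd2_isotropic_of_not_definite[OF pA] by blast
    hence "det2 N = 0"
      using psd_blocks_radical[OF psd] unfolding N_def
      by (intro det2_eq_0_of_left_kernel) (simp_all add: form2_diff_matrix)
    thus ?thesis
      by (intro proportional) simp
  qed
qed

section \<open>Positive semidefinite matrices and qubit maps\<close>

lemma sum_lessThan_double: "(\<Sum>I<2*(n::nat). g I) = (\<Sum>i<n. g i) + (\<Sum>i<n. g (n + i))"
proof -
  have "(\<Sum>I<2*n. g I) = (\<Sum>I\<in>{0..<n}. g I) + (\<Sum>I\<in>{n..<n+n}. g I)"
    by (simp add: lessThan_atLeast0 sum.atLeastLessThan_concat mult_2)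
  also have "(\<Sum>I\<in>{n..<n+n}. g I) = (\<Sum>i\<in>{0..<n}. g (n + i))"
    using sum.shift_bounds_nat_ivl[of g 0 n n] by (simp add: add.commute)
  finally show ?thesis
    by (simp add: lessThan_atLeast0)
qed

lemma sum_eq_single_support:
  assumes "finite S" "i \<in> S" "\<forall>k\<in>S. k \<noteq> i \<longrightarrow> g k = 0"
  shows "sum g S = g i"
proof -
  have "sum g S = sum g {i}"
    using assms by (intro sum.mono_neutral_right) auto
  thus ?thesis
    by simp
qed

lemma sum_eq_two_support:
  assumes "finite S" "i \<in> S" "j \<in> S" "i \<noteq> j" "\<forall>k\<in>S. k \<noteq> i \<longrightarrow> k \<noteq> j \<longrightarrow> g k = 0"
  shows "sum g S = g i + g j"
proof -
  have "sum g S = sum g {i, j}"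
    using assms by (intro sum.mono_neutral_right) auto
  thus ?thesis
    using assms(4) by simp
qed

definition qform :: "nat \<Rightarrow> complex mat \<Rightarrow> (nat \<Rightarrow> complex) \<Rightarrow> complex" where
  "qform N M v = (\<Sum>i<N. \<Sum>j<N. cnj (v i) * M $$ (i, j) * v j)"

lemma psd_qform:
  assumes "psd N M"
  shows "Im (qform N M v) = 0" "0 \<le> Re (qform N M v)"
proof -
  obtain r where "r \<ge> 0" "qform N M v = complex_of_real r"
    using assms unfolding psd_def qform_def by blast
  thus "Im (qform N M v) = 0" "0 \<le> Re (qform N M v)"
    by simp_all
qed

lemma psdI:
  assumes "M \<in> carrier_mat N N" "\<And>v. Im (qform N M v) = 0 \<and> 0 \<le> Re (qform N M v)"
  shows "psd N M"
  unfolding psd_def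
proof (intro conjI allI assms(1))
  fix v
  have "Re (qform N M v) \<ge> 0 \<and> qform N M v = complex_of_real (Re (qform N M v))"
    using assms(2)[of v] by (simp add: complex_eq_iff)
  thus "\<exists>r\<ge>0. (\<Sum>i<N. \<Sum>j<N. cnj (v i) * M $$ (i, j) * v j) = complex_of_real r"
    unfolding qform_def by blast
qed

lemma qform_single:
  assumes "i < N"
  shows "qform N M (\<lambda>k. if k = i then a else 0) = cnj a * M $$ (i, i) * a"
  unfolding qform_def using assms
  by (subst sum_eq_single_support[of _ i]) (auto intro!: sum.neutral simp: sum_eq_single_support[of _ i])

lemma qform_pair:
  assumes "i < N" "j < N" "i \<noteq> j"
  shows "qform N M (\<lambda>k. if k = i then a else if k = j then b else 0)
    = cnj a * M $$ (i, i) * a + cnj a * M $$ (i, j) * b + cnj b * M $$ (j, i) * a + cnj b * M $$ (j, j) * b"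
proof -
  let ?v = "\<lambda>k. if k = i then a else if k = j then b else 0"
  have inner: "(\<Sum>l<N. cnj (?v k) * M $$ (k, l) * ?v l) = cnj (?v k) * M $$ (k, i) * a + cnj (?v k) * M $$ (k, j) * b"
    for k
    using assms by (subst sum_eq_two_support[of _ i j]) auto
  show ?thesis
    unfolding qform_def inner using assms by (subst sum_eq_two_support[of _ i j]) (auto simp: algebra_simps)
qed

lemma psd_diag:
  assumes "psd N M" "i < N"
  shows "Im (M $$ (i, i)) = 0" "0 \<le> Re (M $$ (i, i))"
  using psd_qform[OF assms(1), of "\<lambda>k. if k = i then 1 else 0"] unfolding qform_single[OF assms(2)]
  by simp_all

lemma psd_hermitian:
  assumes "psd N M" "i < N" "j < N"
  shows "M $$ (j, i) = cnj (M $$ (i, j))"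
proof (cases "i = j")
  case True
  thus ?thesis
    using psd_diag[OF assms(1,2)] by (simp add: complex_eq_iff)
next
  case False
  have d: "Im (M $$ (i, i)) = 0" "Im (M $$ (j, j)) = 0"
    using psd_diag assms by auto
  have "Im (qform N M (\<lambda>k. if k = i then 1 else if k = j then 1 else 0)) = 0"
    by (rule psd_qform[OF assms(1)])
  hence "Im (M $$ (i, j)) + Im (M $$ (j, i)) = 0"
    unfolding qform_pair[OF assms(2,3) False] using d by simp
  moreover have "Im (qform N M (\<lambda>k. if k = i then 1 else if k = j then \<i> else 0)) = 0"
    by (rule psd_qform[OF assms(1)])
  hence "Re (M $$ (i, j)) - Re (M $$ (j, i)) = 0"
    unfolding qform_pair[OF assms(2,3) False] using d by simp
  ultimately show ?thesis
    by (simp add: complex_eq_iff)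
qed

lemma psd_zero_diag:
  assumes "psd N M" "i < N" "j < N" "M $$ (i, i) = 0"
  shows "M $$ (i, j) = 0"
proof (cases "i = j")
  case True
  thus ?thesis
    using assms by simp
next
  case False
  define m where "m = M $$ (i, j)"
  have h: "M $$ (j, i) = cnj m"
    unfolding m_def by (rule psd_hermitian[OF assms(1-3)])
  have dj: "Im (M $$ (j, j)) = 0"
    using psd_diag assms by auto
  have "Re (qform N M (\<lambda>k. if k = i then of_real t else if k = j then - cnj m else 0))
      = - 2 * t * (cmod m)\<^sup>2 + (cmod m)\<^sup>2 * Re (M $$ (j, j))" for t
    unfolding qform_pair[OF assms(2,3) False] h assms(4) m_def[symmetric] using dj
    by (simp add: cmod_power2[unfolded power2_eq_square] power2_eq_square algebra_simps)
  hence "0 \<le> - 2 * t * (cmod m)\<^sup>2 + (cmod m)\<^sup>2 * Re (M $$ (j, j))" for t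
    using psd_qform(2)[OF assms(1)] by metis
  from this[of "Re (M $$ (j, j)) + 1"] have "(cmod m)\<^sup>2 * (Re (M $$ (j, j)) + 2) \<le> 0"
    by (simp add: algebra_simps)
  moreover have "0 < Re (M $$ (j, j)) + 2"
    using psd_diag(2)[OF assms(1,3)] by simp
  ultimately have "(cmod m)\<^sup>2 \<le> 0"
    by (simp add: mult_le_0_iff)
  thus ?thesis
    unfolding m_def by simp
qed

lemma psd_eq_0_of_trace_0:
  assumes "psd n M" "(\<Sum>i<n. Re (M $$ (i, i))) = 0" "i < n" "j < n"
  shows "M $$ (i, j) = 0"
proof -
  have "(\<Sum>i<n. Re (M $$ (i, i))) = 0 \<longleftrightarrow> (\<forall>k\<in>{..<n}. Re (M $$ (k, k)) = 0)"
    by (rule sum_nonneg_eq_0_iff) (auto intro: psd_diag(2)[OF assms(1)])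
  hence "M $$ (i, i) = 0"
    using assms(2,3) psd_diag(1)[OF assms(1,3)] by (simp add: complex_eq_iff)
  thus ?thesis
    by (rule psd_zero_diag[OF assms(1,3,4)])
qed

lemma is_state_corner:
  assumes n: "0 < n"
  shows "is_state n (mat n n (\<lambda>(i, j). if i = 0 \<and> j = 0 then 1 else 0))" (is "is_state n ?E")
  unfolding is_state_def
proof
  show "psd n ?E"
  proof (rule psdI)
    fix v :: "nat \<Rightarrow> complex"
    have "qform n ?E v = (\<Sum>j<n. cnj (v 0) * ?E $$ (0, j) * v j)"
      unfolding qform_def using n by (intro sum_eq_single_support) auto
    also have "\<dots> = cnj (v 0) * ?E $$ (0, 0) * v 0"
      using n by (intro sum_eq_single_support) auto
    also have "\<dots> = of_real ((cmod (v 0))\<^sup>2)"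
      unfolding complex_norm_square using n by (simp add: mult.commute)
    finally show "Im (qform n ?E v) = 0 \<and> 0 \<le> Re (qform n ?E v)"
      by simp
  qed simp
  have "trace ?E = ?E $$ (0, 0)"
    unfolding trace_def using n by (intro sum_eq_single_support) auto
  thus "trace ?E = 1"
    using n by simp
qed

lemma kron_index:
  assumes "A \<in> carrier_mat 2 2" "B \<in> carrier_mat n n" "I < 2 * n" "J < 2 * n"
  shows "kron A B $$ (I, J) = A $$ (I div n, J div n) * B $$ (I mod n, J mod n)"
  using assms unfolding kron_def by simp

definition choi :: "(complex mat \<Rightarrow> complex mat) \<Rightarrow> nat \<Rightarrow> nat \<Rightarrow> nat \<Rightarrow> nat \<Rightarrow> complex" where
  "choi \<phi> a b c d = \<phi> (unit2 a b) $$ (c, d)"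

lemma unit2_carrier: "unit2 a b \<in> carrier_mat 2 2"
  unfolding unit2_def by simp

lemma unit2_decomposition:
  assumes "X \<in> carrier_mat 2 2"
  shows "X = (X $$ (0, 0) \<cdot>\<^sub>m unit2 0 0 + X $$ (0, 1) \<cdot>\<^sub>m unit2 0 1)
    + (X $$ (1, 0) \<cdot>\<^sub>m unit2 1 0 + X $$ (1, 1) \<cdot>\<^sub>m unit2 1 1)"
  using assms by (intro eq_matI) (auto simp: unit2_def less_2_cases)

lemma qubit_linear_entry:
  assumes lin: "qubit_linear \<phi>" and X: "X \<in> carrier_mat 2 2" and i: "i < 2" and j: "j < 2"
  shows "\<phi> X $$ (i, j) = (\<Sum>a<2. \<Sum>b<2. X $$ (a, b) * choi \<phi> a b i j)"
proof -
  have add: "\<And>X Y. X \<in> carrier_mat 2 2 \<Longrightarrow> Y \<in> carrier_mat 2 2 \<Longrightarrow> \<phi> (X + Y) = \<phi> X + \<phi> Y"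
    and smult: "\<And>X c. X \<in> carrier_mat 2 2 \<Longrightarrow> \<phi> (c \<cdot>\<^sub>m X) = c \<cdot>\<^sub>m \<phi> X"
    and car: "\<And>X. X \<in> carrier_mat 2 2 \<Longrightarrow> \<phi> X \<in> carrier_mat 2 2"
    using lin unfolding qubit_linear_def by blast+
  have u: "c \<cdot>\<^sub>m unit2 a b \<in> carrier_mat 2 2" for a b c
    using unit2_carrier by simp
  have dim: "dim_row (\<phi> (unit2 a b)) = 2" "dim_col (\<phi> (unit2 a b)) = 2" for a b
    using car[OF unit2_carrier] by auto
  have "\<phi> X = (X $$ (0, 0) \<cdot>\<^sub>m \<phi> (unit2 0 0) + X $$ (0, 1) \<cdot>\<^sub>m \<phi> (unit2 0 1))
      + (X $$ (1, 0) \<cdot>\<^sub>m \<phi> (unit2 1 0) + X $$ (1, 1) \<cdot>\<^sub>m \<phi> (unit2 1 1))"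
    by (subst unit2_decomposition[OF X]) (simp add: add u add_carrier_mat smult unit2_carrier)
  also have "\<dots> $$ (i, j) = (\<Sum>a<2. \<Sum>b<2. X $$ (a, b) * choi \<phi> a b i j)"
    using i j dim by (simp add: sum_lessThan_2 choi_def)
  finally show ?thesis .
qed

lemma tensor_id_entry:
  assumes lin: "qubit_linear \<phi>" and I: "I < 2 * n" and J: "J < 2 * n"
  shows "tensor_id \<phi> n \<rho> $$ (I, J)
    = (\<Sum>a<2. \<Sum>b<2. \<rho> $$ (a * n + I mod n, b * n + J mod n) * choi \<phi> a b (I div n) (J div n))"
proof -
  have "I div n < 2" "J div n < 2"
    using I J by (auto simp: div_less_iff_less_mult mult.commute)
  thus ?thesis
    unfolding tensor_id_def using I J by (simp add: qubit_linear_entry[OF lin])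
qed

section \<open>Measure-and-prepare form of a singular channel\<close>

text \<open>\<open>choi_block \<phi> s k l\<close> is the \<open>(k, l)\<close> block of \<open>(\<phi> \<otimes> I) (\<psi> \<psi>\<^sup>*)\<close> for
  \<open>\<psi> = \<Sum>\<^sub>a\<^sub>,\<^sub>k s k a e\<^sub>a \<otimes> e\<^sub>k\<close>; for \<open>s = I\<close> these are the blocks of the Choi matrix.\<close>
definition choi_block :: "(complex mat \<Rightarrow> complex mat) \<Rightarrow> (nat \<Rightarrow> nat \<Rightarrow> complex) \<Rightarrow> nat \<Rightarrow> nat \<Rightarrow> nat \<Rightarrow> nat \<Rightarrow> complex" where
  "choi_block \<phi> s k l c d = (\<Sum>a<2. \<Sum>b<2. s k a * cnj (s l b) * choi \<phi> a b c d)"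

definition rank_one_proj :: "(nat \<Rightarrow> nat \<Rightarrow> complex) \<Rightarrow> complex mat" where
  "rank_one_proj s = mat 4 4 (\<lambda>(I, J). s (I mod 2) (I div 2) * cnj (s (J mod 2) (J div 2)))"

lemma psd_rank_one_proj: "psd 4 (rank_one_proj s)"
proof (rule psdI)
  show "rank_one_proj s \<in> carrier_mat 4 4"
    unfolding rank_one_proj_def by simp
  fix v :: "nat \<Rightarrow> complex"
  define z where "z = (\<Sum>I<4. cnj (v I) * s (I mod 2) (I div 2))"
  have "qform 4 (rank_one_proj s) v
      = (\<Sum>I<4. \<Sum>J<4. (cnj (v I) * s (I mod 2) (I div 2)) * cnj (cnj (v J) * s (J mod 2) (J div 2)))"
    unfolding qform_def rank_one_proj_def by (intro sum.cong refl) (simp add: algebra_simps)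
  also have "\<dots> = z * cnj z"
    unfolding z_def cnj_sum sum_product by simp
  also have "\<dots> = of_real ((cmod z)\<^sup>2)"
    by (rule complex_norm_square[symmetric])
  finally show "Im (qform 4 (rank_one_proj s) v) = 0 \<and> 0 \<le> Re (qform 4 (rank_one_proj s) v)"
    by simp
qed

lemma psd_tensor_id_rank_one_proj:
  assumes "completely_positive \<phi>"
  shows "psd 4 (tensor_id \<phi> 2 (rank_one_proj s))"
  using assms psd_rank_one_proj unfolding completely_positive_def
  by (metis mult_2 numeral_Bit0 one_plus_numeral numeral_plus_one)

lemma tensor_id_rank_one_proj:
  assumes lin: "qubit_linear \<phi>" and I: "I < 4" and J: "J < 4"
  shows "tensor_id \<phi> 2 (rank_one_proj s) $$ (I, J) = choi_block \<phi> s (I mod 2) (J mod 2) (I div 2) (J div 2)"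
proof -
  have "tensor_id \<phi> 2 (rank_one_proj s) $$ (I, J)
      = (\<Sum>a<2. \<Sum>b<2. rank_one_proj s $$ (a*2 + I mod 2, b*2 + J mod 2) * choi \<phi> a b (I div 2) (J div 2))"
    using tensor_id_entry[OF lin, of I 2 J] I J by simp
  also have "\<dots> = choi_block \<phi> s (I mod 2) (J mod 2) (I div 2) (J div 2)"
    unfolding choi_block_def sum_lessThan_2 rank_one_proj_def by simp
  finally show ?thesis .
qed

lemma qform_tensor_id_rank_one_proj:
  assumes "qubit_linear \<phi>"
  shows "qform 4 (tensor_id \<phi> 2 (rank_one_proj s)) (\<lambda>I. if I mod 2 = 0 then x1 (I div 2) else x2 (I div 2))
     = form2 (choi_block \<phi> s 0 0) x1 x1 + form2 (choi_block \<phi> s 0 1) x1 x2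
       + form2 (choi_block \<phi> s 1 0) x2 x1 + form2 (choi_block \<phi> s 1 1) x2 x2"
  unfolding qform_def sum_lessThan_4 using tensor_id_rank_one_proj[OF assms]
  by (simp add: form2_def)

lemma choi_hermitian:
  assumes lin: "qubit_linear \<phi>" and cp: "completely_positive \<phi>"
    and abcd: "a < 2" "b < 2" "c < 2" "d < 2"
  shows "choi \<phi> b a d c = cnj (choi \<phi> a b c d)"
proof -
  define s :: "nat \<Rightarrow> nat \<Rightarrow> complex" where "s = (\<lambda>k a. if k = a then 1 else 0)"
  have s: "choi_block \<phi> s k l c d = choi \<phi> k l c d" if "k < 2" "l < 2" for k l c d
    using that unfolding choi_block_def sum_lessThan_2 s_def by (auto simp: less_2_cases)
  let ?T = "tensor_id \<phi> 2 (rank_one_proj s)"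
  have I: "2*c + a < 4" "2*d + b < 4"
    using abcd by auto
  have "?T $$ (2*d + b, 2*c + a) = cnj (?T $$ (2*c + a, 2*d + b))"
    by (rule psd_hermitian[OF psd_tensor_id_rank_one_proj[OF cp] I])
  thus ?thesis
    unfolding tensor_id_rank_one_proj[OF lin I(1) I(2)] tensor_id_rank_one_proj[OF lin I(2) I(1)]
    using abcd by (simp add: s)
qed

lemma choi_block_hermitian:
  assumes lin: "qubit_linear \<phi>" and cp: "completely_positive \<phi>" and cd: "c < 2" "d < 2"
  shows "choi_block \<phi> s l k d c = cnj (choi_block \<phi> s k l c d)"
proof -
  have h: "choi \<phi> b a d c = cnj (choi \<phi> a b c d)" if "a < 2" "b < 2" for a b
    using choi_hermitian[OF lin cp that cd] .
  show ?thesis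
    unfolding choi_block_def sum_lessThan_2 using h[of 0 0] h[of 0 1] h[of 1 0] h[of 1 1]
    by (simp add: algebra_simps)
qed

lemma choi_trace:
  assumes lin: "qubit_linear \<phi>" and tp: "trace_preserving \<phi>" and ab: "a < 2" "b < 2"
  shows "choi \<phi> a b 0 0 + choi \<phi> a b 1 1 = (if a = b then 1 else 0)"
proof -
  have car: "\<phi> (unit2 a b) \<in> carrier_mat 2 2"
    using lin unit2_carrier unfolding qubit_linear_def by blast
  have "trace (\<phi> (unit2 a b)) = trace (unit2 a b)"
    using tp unit2_carrier unfolding trace_preserving_def by blast
  moreover have "trace (\<phi> (unit2 a b)) = choi \<phi> a b 0 0 + choi \<phi> a b 1 1"
    unfolding trace_def choi_def using car by (simp add: sum_lessThan_2)
  moreover have "trace (unit2 a b) = (if a = b then 1 else 0)"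
    unfolding trace_def unit2_def using ab by (auto simp: sum_lessThan_2 less_2_cases)
  ultimately show ?thesis
    by simp
qed

text \<open>\<open>\<phi>\<close> maps the matrix with entries \<open>X a b\<close> to zero.\<close>
definition choi_kernel :: "(complex mat \<Rightarrow> complex mat) \<Rightarrow> (nat \<Rightarrow> nat \<Rightarrow> complex) \<Rightarrow> bool" where
  "choi_kernel \<phi> X \<longleftrightarrow> (\<forall>c<2. \<forall>d<2. (\<Sum>a<2. \<Sum>b<2. X a b * choi \<phi> a b c d) = 0)"

lemma choi_kernel_of_det_zero:
  assumes "det_superop \<phi> = 0"
  obtains X where "\<exists>a<2. \<exists>b<2. X a b \<noteq> 0" "choi_kernel \<phi> X"
proof -
  have car: "superop_matrix \<phi> \<in> carrier_mat 4 4"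
    unfolding superop_matrix_def by simp
  obtain v where v: "v \<in> carrier_vec 4" "v \<noteq> 0\<^sub>v 4" "superop_matrix \<phi> *\<^sub>v v = 0\<^sub>v 4"
    using assms det_0_iff_vec_prod_zero[OF car] unfolding det_superop_def by blast
  define X where "X = (\<lambda>a b. v $ (2*a + b))"
  obtain i where i: "i < 4" "v $ i \<noteq> 0"
    using v(1,2) by (metis carrier_vecD eq_vecI index_zero_vec(1,2))
  have "X (i div 2) (i mod 2) \<noteq> 0" "i div 2 < 2" "i mod 2 < 2"
    unfolding X_def using i by (simp_all add: mult.commute)
  hence nz: "\<exists>a<2. \<exists>b<2. X a b \<noteq> 0"
    by blast
  have row: "(\<Sum>j<4. superop_matrix \<phi> $$ (r, j) * v $ j) = 0" if "r < 4" for r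
    using arg_cong[OF v(3), of "\<lambda>w. w $ r"] car v(1) that by (simp add: scalar_prod_def atLeast0LessThan)
  have "(\<Sum>a<2. \<Sum>b<2. X a b * choi \<phi> a b c d) = 0" if "c < 2" "d < 2" for c d
  proof -
    from that have "c = 0 \<or> c = 1" "d = 0 \<or> d = 1"
      by auto
    thus ?thesis
      using row[of "2*c+d"]
      by (auto simp: sum_lessThan_4 sum_lessThan_2 X_def superop_matrix_def choi_def algebra_simps;
          simp add: numeral_2_eq_2 numeral_3_eq_3)
  qed
  hence "choi_kernel \<phi> X"
    unfolding choi_kernel_def by blast
  with nz show ?thesis
    by (rule that)
qed

lemma choi_kernel_lincomb:
  assumes "choi_kernel \<phi> X" "choi_kernel \<phi> Y"
  shows "choi_kernel \<phi> (\<lambda>a b. p * X a b + q * Y a b)"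
  unfolding choi_kernel_def
proof (intro allI impI)
  fix c d :: nat
  assume "c < 2" "d < 2"
  have "(\<Sum>a<2. \<Sum>b<2. (p * X a b + q * Y a b) * choi \<phi> a b c d)
      = p * (\<Sum>a<2. \<Sum>b<2. X a b * choi \<phi> a b c d) + q * (\<Sum>a<2. \<Sum>b<2. Y a b * choi \<phi> a b c d)"
    by (simp add: sum_lessThan_2 algebra_simps)
  thus "(\<Sum>a<2. \<Sum>b<2. (p * X a b + q * Y a b) * choi \<phi> a b c d) = 0"
    using assms \<open>c < 2\<close> \<open>d < 2\<close> unfolding choi_kernel_def by simp
qed

lemma choi_kernel_adjoint:
  assumes lin: "qubit_linear \<phi>" and cp: "completely_positive \<phi>" and X: "choi_kernel \<phi> X"
  shows "choi_kernel \<phi> (\<lambda>a b. cnj (X b a))"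
  unfolding choi_kernel_def
proof (intro allI impI)
  fix c d :: nat
  assume cd: "c < 2" "d < 2"
  have h: "choi \<phi> a b c d = cnj (choi \<phi> b a d c)" if "a < 2" "b < 2" for a b
    using choi_hermitian[OF lin cp that(2,1) cd(2,1)] by simp
  have "(\<Sum>a<2. \<Sum>b<2. cnj (X b a) * choi \<phi> a b c d) = cnj (\<Sum>a<2. \<Sum>b<2. X a b * choi \<phi> a b d c)"
    using h[of 0 0] h[of 0 1] h[of 1 0] h[of 1 1] unfolding sum_lessThan_2 by simp
  thus "(\<Sum>a<2. \<Sum>b<2. cnj (X b a) * choi \<phi> a b c d) = 0"
    using X cd unfolding choi_kernel_def by simp
qed

lemma choi_kernel_traceless:
  assumes lin: "qubit_linear \<phi>" and tp: "trace_preserving \<phi>" and X: "choi_kernel \<phi> X"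
  shows "X 1 1 = - X 0 0"
proof -
  have t: "choi \<phi> a b 0 0 + choi \<phi> a b 1 1 = (if a = b then 1 else 0)" if "a < 2" "b < 2" for a b
    using choi_trace[OF lin tp that] .
  have "X 0 0 + X 1 1 = (\<Sum>a<2. \<Sum>b<2. X a b * (choi \<phi> a b 0 0 + choi \<phi> a b 1 1))"
    using t[of 0 0] t[of 0 1] t[of 1 0] t[of 1 1] by (simp add: sum_lessThan_2)
  also have "\<dots> = (\<Sum>a<2. \<Sum>b<2. X a b * choi \<phi> a b 0 0) + (\<Sum>a<2. \<Sum>b<2. X a b * choi \<phi> a b 1 1)"
    by (simp add: sum_lessThan_2 algebra_simps)
  also have "\<dots> = 0"
    using X unfolding choi_kernel_def by simp
  finally show ?thesis
    by (simp add: eq_neg_iff_add_eq_0 add.commute)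
qed

definition traceless_hermitian2 :: "(nat \<Rightarrow> nat \<Rightarrow> complex) \<Rightarrow> bool" where
  "traceless_hermitian2 H \<longleftrightarrow> H 1 0 = cnj (H 0 1) \<and> Im (H 0 0) = 0 \<and> H 1 1 = - H 0 0"

lemma hermitian_kernel_of_det_zero:
  assumes lin: "qubit_linear \<phi>" and cp: "completely_positive \<phi>" and tp: "trace_preserving \<phi>"
    and det: "det_superop \<phi> = 0"
  obtains H where "traceless_hermitian2 H" "H 0 0 \<noteq> 0 \<or> H 0 1 \<noteq> 0" "choi_kernel \<phi> H"
proof -
  obtain X where nz: "\<exists>a<2. \<exists>b<2. X a b \<noteq> 0" and X: "choi_kernel \<phi> X"
    using choi_kernel_of_det_zero[OF det] by blast
  have Xadj: "choi_kernel \<phi> (\<lambda>a b. cnj (X b a))"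
    by (rule choi_kernel_adjoint[OF lin cp X])
  have tr: "X 1 1 = - X 0 0"
    by (rule choi_kernel_traceless[OF lin tp X])
  define H1 where "H1 = (\<lambda>a b. X a b + cnj (X b a))"
  define H2 where "H2 = (\<lambda>a b. \<i> * X a b - \<i> * cnj (X b a))"
  have "choi_kernel \<phi> H1" "choi_kernel \<phi> H2"
    using choi_kernel_lincomb[OF X Xadj, of 1 1] choi_kernel_lincomb[OF X Xadj, of \<i> "- \<i>"]
    unfolding H1_def H2_def by simp_all
  moreover have "traceless_hermitian2 H1" "traceless_hermitian2 H2"
    unfolding traceless_hermitian2_def H1_def H2_def using tr by (simp_all add: algebra_simps)
  moreover have "(H1 0 0 \<noteq> 0 \<or> H1 0 1 \<noteq> 0) \<or> (H2 0 0 \<noteq> 0 \<or> H2 0 1 \<noteq> 0)"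
  proof (rule ccontr)
    assume "\<not> ?thesis"
    with \<open>traceless_hermitian2 H1\<close> \<open>traceless_hermitian2 H2\<close>
    have "H1 a b = 0 \<and> H2 a b = 0" if "a < 2" "b < 2" for a b
      using that unfolding traceless_hermitian2_def by (auto simp: less_2_cases)
    moreover have "2 * X a b = H1 a b - \<i> * H2 a b" for a b
      unfolding H1_def H2_def by (simp add: algebra_simps)
    ultimately show False
      using nz by (metis diff_zero mult_eq_0_iff mult_zero_right zero_neq_numeral)
  qed
  ultimately show ?thesis
    using that by blast
qed

lemma traceless_hermitian2_split_nondegenerate:
  assumes H: "traceless_hermitian2 H"
    and ne: "sqrt ((Re (H 0 0))\<^sup>2 + (cmod (H 0 1))\<^sup>2) \<noteq> Re (H 0 0)"
  shows "\<exists>u v. \<exists>k::real. k \<noteq> 0 \<and> (\<forall>a<2. \<forall>b<2. u a * cnj (u b) - v a * cnj (v b) = 2 * of_real k * H a b)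
     \<and> u 0 * v 1 - v 0 * u 1 \<noteq> 0"
proof -
  define a where "a = Re (H 0 0)"
  define b where "b = H 0 1"
  define r where "r = sqrt (a\<^sup>2 + (cmod b)\<^sup>2)"
  define k where "k = r - a"
  have k0: "k \<noteq> 0"
    using ne unfolding k_def r_def a_def b_def by simp
  have H00: "H 0 0 = of_real a" and H11: "H 1 1 = - of_real a" and H01: "H 0 1 = b" and H10: "H 1 0 = cnj b"
    using H unfolding traceless_hermitian2_def a_def b_def by (auto simp: complex_eq_iff)
  have "r * r = a * a + (cmod b)\<^sup>2"
    unfolding r_def by (simp add: power2_eq_square[symmetric])
  hence bb: "b * cnj b = of_real r * of_real r - of_real a * of_real a"
    unfolding complex_norm_square[symmetric] by (simp flip: of_real_mult of_real_diff)
  hence bb': "cnj b * b = of_real r * of_real r - of_real a * of_real a"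
    by (simp add: mult.commute)
  have kc: "(of_real k :: complex) = of_real r - of_real a"
    unfolding k_def by simp
  define u :: "nat \<Rightarrow> complex" where "u = (\<lambda>i. if i = 0 then b else of_real k)"
  define v :: "nat \<Rightarrow> complex" where "v = (\<lambda>i. if i = 0 then - of_real k else cnj b)"
  have "u i * cnj (u j) - v i * cnj (v j) = 2 * of_real k * H i j" if "i < 2" "j < 2" for i j
  proof -
    from that consider "i = 0" "j = 0" | "i = 0" "j = 1" | "i = 1" "j = 0" | "i = 1" "j = 1"
      by (auto simp: less_2_cases)
    thus ?thesis
      by cases (simp_all add: u_def v_def H00 H01 H10 H11 kc bb bb' algebra_simps
          H01[unfolded One_nat_def] H10[unfolded One_nat_def] H11[unfolded One_nat_def])
  qed
  moreover have "u 0 * v 1 - v 0 * u 1 = of_real ((cmod b)\<^sup>2 + k * k)"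
    unfolding u_def v_def using complex_norm_square[of b] by simp
  moreover have "0 < (cmod b)\<^sup>2 + k * k"
    using k0 by (intro add_nonneg_pos) (auto simp: zero_less_mult_iff linorder_neq_iff)
  ultimately show ?thesis
    using k0 by (metis less_irrefl of_real_eq_0_iff)
qed

text \<open>\<open>u\<close> and \<open>v\<close> are rescaled eigenvectors of \<open>H\<close>; where the formula of
  \<open>traceless_hermitian2_split_nondegenerate\<close> degenerates, it is applied to \<open>- H\<close>.\<close>
lemma traceless_hermitian2_split:
  assumes H: "traceless_hermitian2 H" and nz: "H 0 0 \<noteq> 0 \<or> H 0 1 \<noteq> 0"
  obtains u v k where "k \<noteq> 0" "\<forall>a<2. \<forall>b<2. u a * cnj (u b) - v a * cnj (v b) = 2 * of_real k * H a b"
    "u 0 * v 1 - v 0 * u 1 \<noteq> 0"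
proof (cases "sqrt ((Re (H 0 0))\<^sup>2 + (cmod (H 0 1))\<^sup>2) = Re (H 0 0)")
  case False
  thus ?thesis
    using traceless_hermitian2_split_nondegenerate[OF H] that by blast
next
  case True
  have "Re (H 0 0) \<noteq> 0 \<or> H 0 1 \<noteq> 0"
    using nz H unfolding traceless_hermitian2_def by (auto simp: complex_eq_iff)
  hence "0 < (Re (H 0 0))\<^sup>2 + (cmod (H 0 1))\<^sup>2"
    by (auto simp: add_pos_nonneg add_nonneg_pos)
  hence "0 < sqrt ((Re (H 0 0))\<^sup>2 + (cmod (H 0 1))\<^sup>2)"
    by simp
  hence "0 < Re (H 0 0)"
    unfolding True .
  moreover have "sqrt ((Re (- H 0 0))\<^sup>2 + (cmod (- H 0 1))\<^sup>2) = Re (H 0 0)"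
    using True by simp
  ultimately have "sqrt ((Re (- H 0 0))\<^sup>2 + (cmod (- H 0 1))\<^sup>2) \<noteq> Re (- H 0 0)"
    by simp
  moreover have "traceless_hermitian2 (\<lambda>a b. - H a b)"
    using H unfolding traceless_hermitian2_def by simp
  ultimately obtain u v and k :: real where k: "k \<noteq> 0"
    and uv: "\<forall>a<2. \<forall>b<2. u a * cnj (u b) - v a * cnj (v b) = 2 * of_real k * - H a b"
    and det: "u 0 * v 1 - v 0 * u 1 \<noteq> 0"
    using traceless_hermitian2_split_nondegenerate[of "\<lambda>a b. - H a b"] by blast
  show ?thesis
  proof (rule that[of k v u])
    show "\<forall>a<2. \<forall>b<2. v a * cnj (v b) - u a * cnj (u b) = 2 * of_real k * H a b"
    proof (intro allI impI)
      fix a b :: nat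
      assume "a < 2" "b < 2"
      hence "u a * cnj (u b) - v a * cnj (v b) = 2 * of_real k * - H a b"
        using uv by blast
      thus "v a * cnj (v b) - u a * cnj (u b) = 2 * of_real k * H a b"
        by (simp add: algebra_simps)
    qed
    show "v 0 * u 1 - u 0 * v 1 \<noteq> 0"
      using det by (simp add: algebra_simps)
  qed (rule k)
qed

lemma psd_blocks_choi_block:
  assumes lin: "qubit_linear \<phi>" and cp: "completely_positive \<phi>"
    and sym: "\<And>c d. c < 2 \<Longrightarrow> d < 2 \<Longrightarrow> choi_block \<phi> s 0 1 c d = choi_block \<phi> s 1 0 c d"
  shows "psd_blocks (choi_block \<phi> s 0 0) (choi_block \<phi> s 0 1) (choi_block \<phi> s 1 1)"
proof -
  let ?Bl = "choi_block \<phi> s"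
  have bh: "?Bl l j d c = cnj (?Bl j l c d)" if "c < 2" "d < 2" for j l c d
    by (rule choi_block_hermitian[OF lin cp that])
  have bh00: "?Bl j j 1 0 = cnj (?Bl j j 0 1)" "?Bl j j 0 0 = cnj (?Bl j j 0 0)" "?Bl j j 1 1 = cnj (?Bl j j 1 1)" for j
    using bh[where j=j and l=j and c=0 and d=1] bh[where j=j and l=j and c=0 and d=0]
      bh[where j=j and l=j and c=1 and d=1] by simp_all
  have real: "Im z = 0" if "z = cnj z" for z
    using that by (metis cnj.sel(2) complex.sel(2) equal_neg_zero)
  have "hermitian2 (?Bl 0 0)" "hermitian2 (?Bl 1 1)"
    unfolding hermitian2_def using bh00 real by auto
  moreover have "?Bl 0 1 1 0 = cnj (?Bl 0 1 0 1)" "?Bl 0 1 0 0 = cnj (?Bl 0 1 0 0)" "?Bl 0 1 1 1 = cnj (?Bl 0 1 1 1)"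
    using bh[where j=1 and l=0 and c=0 and d=1] bh[where j=1 and l=0 and c=0 and d=0]
      bh[where j=1 and l=0 and c=1 and d=1] sym[of 0 1] sym[of 0 0] sym[of 1 1] by simp_all
  hence "hermitian2 (?Bl 0 1)"
    unfolding hermitian2_def using real by auto
  moreover have "0 \<le> Re (block_form (?Bl 0 0) (?Bl 0 1) (?Bl 1 1) x1 x2 x1 x2)" for x1 x2
  proof -
    have "form2 (?Bl 1 0) x2 x1 = form2 (?Bl 0 1) x2 x1"
      by (rule form2_cong; rule sym[symmetric]; simp)
    hence "block_form (?Bl 0 0) (?Bl 0 1) (?Bl 1 1) x1 x2 x1 x2
        = qform 4 (tensor_id \<phi> 2 (rank_one_proj s)) (\<lambda>I. if I mod 2 = 0 then x1 (I div 2) else x2 (I div 2))"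
      unfolding qform_tensor_id_rank_one_proj[OF lin] block_form_def by simp
    thus ?thesis
      using psd_qform(2)[OF psd_tensor_id_rank_one_proj[OF cp]] by simp
  qed
  ultimately show ?thesis
    unfolding psd_blocks_def by blast
qed

text \<open>The off-diagonal blocks for the rows \<open>u + v\<close> and \<open>\<i>(u - v)\<close> differ by
  \<open>-4\<i>k \<phi>(H)\<close>, since \<open>(u + v)(\<i>(u - v))\<^sup>* - \<i>(u - v)(u + v)\<^sup>* = -2\<i>(u u\<^sup>* - v v\<^sup>*)\<close>.\<close>
lemma choi_block_symmetric_of_kernel:
  assumes ker: "choi_kernel \<phi> H"
    and uv: "\<forall>a<2. \<forall>b<2. u a * cnj (u b) - v a * cnj (v b) = 2 * of_real k * H a b"
    and s: "s = (\<lambda>j a. if j = 0 then u a + v a else \<i> * (u a - v a))"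
    and cd: "c < 2" "d < 2"
  shows "choi_block \<phi> s 0 1 c d = choi_block \<phi> s 1 0 c d"
proof -
  have dif: "s 0 a * cnj (s 1 b) - s 1 a * cnj (s 0 b) = (- 4 * \<i> * of_real k) * H a b" if "a < 2" "b < 2" for a b
  proof -
    have "s 0 a * cnj (s 1 b) - s 1 a * cnj (s 0 b) = - 2 * \<i> * (u a * cnj (u b) - v a * cnj (v b))"
      unfolding s by (simp add: algebra_simps)
    thus ?thesis
      using uv that by simp
  qed
  have "choi_block \<phi> s 0 1 c d - choi_block \<phi> s 1 0 c d
      = (\<Sum>a<2. \<Sum>b<2. (s 0 a * cnj (s 1 b) - s 1 a * cnj (s 0 b)) * choi \<phi> a b c d)"
    unfolding choi_block_def sum_lessThan_2 by (simp add: algebra_simps)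
  also have "\<dots> = (- 4 * \<i> * of_real k) * (\<Sum>a<2. \<Sum>b<2. H a b * choi \<phi> a b c d)"
    unfolding sum_distrib_left by (intro sum.cong refl) (subst dif, auto)
  also have "\<dots> = 0"
    using ker cd unfolding choi_kernel_def by simp
  finally show ?thesis
    by simp
qed

lemma choi_eq_choi_block_inverse:
  assumes dS: "det2 s \<noteq> 0"
  obtains Si where "\<And>a b c d. a < 2 \<Longrightarrow> b < 2 \<Longrightarrow>
    choi \<phi> a b c d = (\<Sum>j<2. \<Sum>l<2. Si j a * cnj (Si l b) * choi_block \<phi> s j l c d)"
proof -
  define cof :: "nat \<Rightarrow> nat \<Rightarrow> complex" where
    "cof = (\<lambda>j a. if j = 0 then (if a = 0 then s 1 1 else - s 1 0) else (if a = 0 then - s 0 1 else s 0 0))"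
  define Si where "Si = (\<lambda>j a. cof j a / det2 s)"
  have inv: "(\<Sum>j<2. Si j a * s j a') = (if a' = a then 1 else 0)" if "a < 2" "a' < 2" for a a'
  proof -
    have "cof 0 a * s 0 a' + cof 1 a * s 1 a' = (if a' = a then det2 s else 0)"
      using that unfolding cof_def det2_def by (auto simp: less_2_cases algebra_simps)
    thus ?thesis
      unfolding Si_def sum_lessThan_2 using dS by (simp add: add_divide_distrib[symmetric])
  qed
  have "choi \<phi> a b c d = (\<Sum>j<2. \<Sum>l<2. Si j a * cnj (Si l b) * choi_block \<phi> s j l c d)"
    if ab: "a < 2" "b < 2" for a b c d
  proof -
    have "(\<Sum>j<2. \<Sum>l<2. Si j a * cnj (Si l b) * choi_block \<phi> s j l c d)
       = (\<Sum>a'<2. \<Sum>b'<2. (\<Sum>j<2. Si j a * s j a') * cnj (\<Sum>l<2. Si l b * s l b') * choi \<phi> a' b' c d)"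
      unfolding choi_block_def sum_lessThan_2 by (simp add: algebra_simps)
    also have "\<dots> = (\<Sum>a'<2. \<Sum>b'<2. (if a' = a then 1 else 0) * cnj (if b' = b then 1 else 0) * choi \<phi> a' b' c d)"
      by (intro sum.cong refl) (simp add: inv ab)
    also have "\<dots> = choi \<phi> a b c d"
      unfolding sum_lessThan_2 using ab by (auto simp: less_2_cases)
    finally show ?thesis
      by simp
  qed
  thus ?thesis
    using that by blast
qed

text \<open>Measure-and-prepare form \<open>\<phi>(X) = \<Sum>\<^sub>k \<langle>f\<^sub>k, X f\<^sub>k\<rangle> Q\<^sub>k\<close> of \<open>\<phi>\<close>, stated on the Choi
  coefficients.\<close>
definition measure_prepare :: "(complex mat \<Rightarrow> complex mat) \<Rightarrow> bool" where
  "measure_prepare \<phi> \<longleftrightarrow> (\<exists>(m::nat) (f::nat \<Rightarrow> nat \<Rightarrow> complex) (Q::nat \<Rightarrow> nat \<Rightarrow> nat \<Rightarrow> complex).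
     (\<forall>k<m. psd2 (Q k)) \<and>
     (\<forall>a<2. \<forall>b<2. \<forall>c<2. \<forall>d<2. choi \<phi> a b c d = (\<Sum>k<m. cnj (f k a) * f k b * Q k c d)))"

text \<open>The reality of \<open>b\<^sub>1, b\<^sub>2\<close> is what makes \<open>cnj (f j a) = Si 0 a + b\<^sub>j Si 1 a\<close>.\<close>
lemma measure_prepare_of_separable_choi_blocks:
  assumes choi: "\<And>a b c d. a < 2 \<Longrightarrow> b < 2 \<Longrightarrow>
      choi \<phi> a b c d = (\<Sum>j<2. \<Sum>l<2. Si j a * cnj (Si l b) * choi_block \<phi> s j l c d)"
    and sym: "\<And>c d. c < 2 \<Longrightarrow> d < 2 \<Longrightarrow> choi_block \<phi> s 0 1 c d = choi_block \<phi> s 1 0 c d"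
    and sep: "separable_blocks (choi_block \<phi> s 0 0) (choi_block \<phi> s 0 1) (choi_block \<phi> s 1 1)"
  shows "measure_prepare \<phi>"
proof -
  define A B D where "A = choi_block \<phi> s 0 0" and "B = choi_block \<phi> s 0 1" and "D = choi_block \<phi> s 1 1"
  obtain b1 b2 :: real and Q1 Q2 R where pQ: "psd2 Q1" "psd2 Q2" "psd2 R"
    and blocks: "\<forall>i<2. \<forall>j<2. A i j = Q1 i j + Q2 i j \<and> B i j = of_real b1 * Q1 i j + of_real b2 * Q2 i j
        \<and> D i j = of_real b1 * of_real b1 * Q1 i j + of_real b2 * of_real b2 * Q2 i j + R i j"
    using sep unfolding separable_blocks_def A_def B_def D_def by blast
  define f :: "nat \<Rightarrow> nat \<Rightarrow> complex" where
    "f = (\<lambda>j a. if j = 0 then cnj (Si 0 a) + of_real b1 * cnj (Si 1 a)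
              else if j = 1 then cnj (Si 0 a) + of_real b2 * cnj (Si 1 a) else cnj (Si 1 a))"
  define Q where "Q = (\<lambda>j::nat. if j = 0 then Q1 else if j = 1 then Q2 else R)"
  show ?thesis
    unfolding measure_prepare_def
  proof (intro exI[of _ 3] exI[of _ f] exI[of _ Q] conjI allI impI)
    fix j :: nat
    assume "j < 3"
    thus "psd2 (Q j)"
      unfolding Q_def using pQ by auto
  next
    fix a b c d :: nat
    assume abcd: "a < 2" "b < 2" "c < 2" "d < 2"
    have e: "A c d = Q1 c d + Q2 c d" "B c d = of_real b1 * Q1 c d + of_real b2 * Q2 c d"
      "D c d = of_real b1 * of_real b1 * Q1 c d + of_real b2 * of_real b2 * Q2 c d + R c d"
      using blocks abcd by auto
    have "choi \<phi> a b c d = Si 0 a * cnj (Si 0 b) * A c d + Si 0 a * cnj (Si 1 b) * B c d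
        + Si 1 a * cnj (Si 0 b) * B c d + Si 1 a * cnj (Si 1 b) * D c d"
      unfolding choi[OF abcd(1,2)] sum_lessThan_2 A_def B_def D_def sym[OF abcd(3,4)]
      by (simp add: algebra_simps)
    also have "\<dots> = (Si 0 a + of_real b1 * Si 1 a) * cnj (Si 0 b + of_real b1 * Si 1 b) * Q1 c d
        + (Si 0 a + of_real b2 * Si 1 a) * cnj (Si 0 b + of_real b2 * Si 1 b) * Q2 c d
        + Si 1 a * cnj (Si 1 b) * R c d"
      unfolding e by (simp add: algebra_simps)
    also have "\<dots> = (\<Sum>j<3. cnj (f j a) * f j b * Q j c d)"
      unfolding sum_lessThan_3 f_def Q_def by simp
    finally show "choi \<phi> a b c d = (\<Sum>j<3. cnj (f j a) * f j b * Q j c d)" .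
  qed
qed

lemma measure_prepare_of_det_zero:
  assumes lin: "qubit_linear \<phi>" and cp: "completely_positive \<phi>" and tp: "trace_preserving \<phi>"
    and det: "det_superop \<phi> = 0"
  shows "measure_prepare \<phi>"
proof -
  obtain H where H: "traceless_hermitian2 H" "H 0 0 \<noteq> 0 \<or> H 0 1 \<noteq> 0" and ker: "choi_kernel \<phi> H"
    by (rule hermitian_kernel_of_det_zero[OF lin cp tp det])
  obtain u v k where "k \<noteq> 0" and uv: "\<forall>a<2. \<forall>b<2. u a * cnj (u b) - v a * cnj (v b) = 2 * of_real k * H a b"
    and indep: "u 0 * v 1 - v 0 * u 1 \<noteq> 0"
    by (rule traceless_hermitian2_split[OF H])
  define s :: "nat \<Rightarrow> nat \<Rightarrow> complex" where "s = (\<lambda>j a. if j = 0 then u a + v a else \<i> * (u a - v a))"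
  have sym: "choi_block \<phi> s 0 1 c d = choi_block \<phi> s 1 0 c d" if "c < 2" "d < 2" for c d
    using choi_block_symmetric_of_kernel[OF ker uv s_def that] .
  have "det2 s = - 2 * \<i> * (u 0 * v 1 - v 0 * u 1)"
    unfolding det2_def s_def by (simp add: algebra_simps)
  then obtain Si where choi: "\<And>a b c d. a < 2 \<Longrightarrow> b < 2 \<Longrightarrow>
      choi \<phi> a b c d = (\<Sum>j<2. \<Sum>l<2. Si j a * cnj (Si l b) * choi_block \<phi> s j l c d)"
    using choi_eq_choi_block_inverse[of s] indep by auto
  show ?thesis
    using measure_prepare_of_separable_choi_blocks[OF choi sym]
      separable_blocks_of_psd[OF psd_blocks_choi_block[OF lin cp sym]] by blast
qed

section \<open>Measure-and-prepare channels break entanglement\<close>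

lemma sum_lessThan_double_blocks: "(\<Sum>I<2*(n::nat). g I) = (\<Sum>a<2. \<Sum>i<n. g (a * n + i))"
  unfolding sum_lessThan_double sum_lessThan_2 by simp

lemma qform_double_split:
  "qform (2 * n) M v = (\<Sum>a<2. \<Sum>i<n. \<Sum>b<2. \<Sum>j<n. cnj (v (a * n + i)) * M $$ (a * n + i, b * n + j) * v (b * n + j))"
  unfolding qform_def sum_lessThan_double_blocks ..

lemma sum_swap_blocks:
  fixes F :: "nat \<Rightarrow> nat \<Rightarrow> nat \<Rightarrow> nat \<Rightarrow> complex"
  shows "(\<Sum>a<2. \<Sum>i<n. \<Sum>b<2. \<Sum>j<m. F a i b j) = (\<Sum>i<n. \<Sum>j<m. \<Sum>a<2. \<Sum>b<2. F a i b j)"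
  unfolding sum_lessThan_2 by (simp add: sum.distrib add_ac)

text \<open>\<open>(g\<^sup>* \<otimes> I) \<rho> (g \<otimes> I)\<close>, an operator on the ancilla.\<close>
definition ancilla_block :: "nat \<Rightarrow> complex mat \<Rightarrow> (nat \<Rightarrow> complex) \<Rightarrow> complex mat" where
  "ancilla_block n \<rho> g = mat n n (\<lambda>(i, j). \<Sum>a<2. \<Sum>b<2. cnj (g a) * \<rho> $$ (a * n + i, b * n + j) * g b)"

lemma psd_ancilla_block:
  assumes "psd (2 * n) \<rho>"
  shows "psd n (ancilla_block n \<rho> g)"
proof (rule psdI)
  fix w :: "nat \<Rightarrow> complex"
  define v where "v = (\<lambda>I. g (I div n) * w (I mod n))"
  have "qform (2 * n) \<rho> v
      = (\<Sum>a<2. \<Sum>i<n. \<Sum>b<2. \<Sum>j<n. cnj (g a * w i) * \<rho> $$ (a * n + i, b * n + j) * (g b * w j))"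
    unfolding qform_double_split v_def by (intro sum.cong refl) simp
  also have "\<dots> = (\<Sum>i<n. \<Sum>j<n. \<Sum>a<2. \<Sum>b<2. cnj (g a * w i) * \<rho> $$ (a * n + i, b * n + j) * (g b * w j))"
    by (rule sum_swap_blocks)
  also have "\<dots> = qform n (ancilla_block n \<rho> g) w"
    unfolding qform_def ancilla_block_def
    by (intro sum.cong refl) (simp add: sum_distrib_left sum_distrib_right algebra_simps)
  finally show "Im (qform n (ancilla_block n \<rho> g) w) = 0 \<and> 0 \<le> Re (qform n (ancilla_block n \<rho> g) w)"
    using psd_qform[OF assms, of v] by simp
qed (simp add: ancilla_block_def)

lemma tensor_id_measure_prepare:
  assumes lin: "qubit_linear \<phi>" and I: "I < 2 * n" and J: "J < 2 * n"
    and choi: "\<forall>a<2. \<forall>b<2. \<forall>c<2. \<forall>d<2. choi \<phi> a b c d = (\<Sum>k<m. cnj (f k a) * f k b * Q k c d)"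
  shows "tensor_id \<phi> n \<rho> $$ (I, J) = (\<Sum>k<m. Q k (I div n) (J div n) * ancilla_block n \<rho> (f k) $$ (I mod n, J mod n))"
proof -
  have n: "0 < n"
    using I by simp
  have cd: "I div n < 2" "J div n < 2"
    using I J by (auto simp: div_less_iff_less_mult mult.commute)
  have "tensor_id \<phi> n \<rho> $$ (I, J) = (\<Sum>a<2. \<Sum>b<2. \<rho> $$ (a * n + I mod n, b * n + J mod n) *
      (\<Sum>k<m. cnj (f k a) * f k b * Q k (I div n) (J div n)))"
    unfolding tensor_id_entry[OF lin I J] using choi cd by (intro sum.cong refl) auto
  also have "\<dots> = (\<Sum>k<m. Q k (I div n) (J div n) * ancilla_block n \<rho> (f k) $$ (I mod n, J mod n))"
    unfolding ancilla_block_def using n by (simp add: sum_lessThan_2 sum_distrib_left sum.distrib algebra_simps)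
  finally show ?thesis .
qed

lemma trace_measure_prepare:
  assumes lin: "qubit_linear \<phi>" and tp: "trace_preserving \<phi>" and rc: "\<rho> \<in> carrier_mat (2 * n) (2 * n)"
    and choi: "\<forall>a<2. \<forall>b<2. \<forall>c<2. \<forall>d<2. choi \<phi> a b c d = (\<Sum>k<m. cnj (f k a) * f k b * Q k c d)"
  shows "(\<Sum>k<m. (Q k 0 0 + Q k 1 1) * trace (ancilla_block n \<rho> (f k))) = trace \<rho>"
proof -
  have tr_choi: "choi \<phi> a b 0 0 + choi \<phi> a b 1 1 = (\<Sum>k<m. cnj (f k a) * f k b * (Q k 0 0 + Q k 1 1))"
    if "a < 2" "b < 2" for a b
    using choi that by (simp add: sum.distrib[symmetric] algebra_simps)
  have tr: "choi \<phi> a b 0 0 + choi \<phi> a b 1 1 = (if a = b then 1 else 0)" if "a < 2" "b < 2" for a b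
    using choi_trace[OF lin tp that] .
  have inner: "(\<Sum>k<m. (Q k 0 0 + Q k 1 1) * (\<Sum>a<2. \<Sum>b<2. cnj (f k a) * \<rho> $$ (a * n + i, b * n + i) * f k b))
      = \<rho> $$ (i, i) + \<rho> $$ (n + i, n + i)" for i
  proof -
    have "(\<Sum>k<m. (Q k 0 0 + Q k 1 1) * (\<Sum>a<2. \<Sum>b<2. cnj (f k a) * \<rho> $$ (a * n + i, b * n + i) * f k b))
      = (\<Sum>a<2. \<Sum>b<2. \<rho> $$ (a * n + i, b * n + i) * (\<Sum>k<m. cnj (f k a) * f k b * (Q k 0 0 + Q k 1 1)))"
      by (simp add: sum_lessThan_2 sum_distrib_left sum.distrib algebra_simps)
    also have "\<dots> = (\<Sum>a<2. \<Sum>b<2. \<rho> $$ (a * n + i, b * n + i) * (choi \<phi> a b 0 0 + choi \<phi> a b 1 1))"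
      by (intro sum.cong refl) (subst tr_choi, auto)
    also have "\<dots> = \<rho> $$ (i, i) + \<rho> $$ (n + i, n + i)"
      unfolding sum_lessThan_2 using tr[of 0 0] tr[of 0 1] tr[of 1 0] tr[of 1 1] by simp
    finally show ?thesis .
  qed
  have "(\<Sum>k<m. (Q k 0 0 + Q k 1 1) * trace (ancilla_block n \<rho> (f k)))
      = (\<Sum>k<m. \<Sum>i<n. (Q k 0 0 + Q k 1 1) * (\<Sum>a<2. \<Sum>b<2. cnj (f k a) * \<rho> $$ (a * n + i, b * n + i) * f k b))"
    unfolding trace_def ancilla_block_def by (simp add: sum_distrib_left)
  also have "\<dots> = (\<Sum>i<n. \<Sum>k<m. (Q k 0 0 + Q k 1 1) * (\<Sum>a<2. \<Sum>b<2. cnj (f k a) * \<rho> $$ (a * n + i, b * n + i) * f k b))"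
    by (rule sum.swap)
  also have "\<dots> = (\<Sum>i<n. \<rho> $$ (i, i) + \<rho> $$ (n + i, n + i))"
    unfolding inner ..
  also have "\<dots> = trace \<rho>"
    unfolding trace_def using rc by (simp add: sum_lessThan_double sum.distrib)
  finally show ?thesis .
qed

text \<open>Division by the trace; a trace-zero argument (which will be the zero matrix) is sent to
  an arbitrary state so that the result is always a state.\<close>
definition normalize_state :: "nat \<Rightarrow> complex mat \<Rightarrow> complex mat" where
  "normalize_state n M = (if trace M = 0 then mat n n (\<lambda>(i, j). if i = 0 \<and> j = 0 then 1 else 0)
     else mat n n (\<lambda>(i, j). M $$ (i, j) / trace M))"

lemma normalize_state_carrier: "normalize_state n M \<in> carrier_mat n n"
  unfolding normalize_state_def by simp

lemma trace_psd:
  assumes "psd n M"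
  shows "trace M = of_real (Re (trace M))" "0 \<le> Re (trace M)" "Re (trace M) = (\<Sum>i<n. Re (M $$ (i, i)))"
proof -
  have dim: "dim_row M = n"
    using assms unfolding psd_def by auto
  show re: "Re (trace M) = (\<Sum>i<n. Re (M $$ (i, i)))"
    unfolding trace_def dim by (simp add: Re_sum)
  show "0 \<le> Re (trace M)"
    unfolding re by (rule sum_nonneg) (simp add: psd_diag(2)[OF assms])
  show "trace M = of_real (Re (trace M))"
    unfolding trace_def dim using psd_diag(1)[OF assms] by (simp add: complex_eq_iff Re_sum Im_sum)
qed

lemma is_state_normalize_state:
  assumes psd: "psd n M" and n: "0 < n"
  shows "is_state n (normalize_state n M)"
proof (cases "trace M = 0")
  case True
  thus ?thesis
    unfolding normalize_state_def using is_state_corner[OF n] by simp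
next
  case False
  let ?N = "mat n n (\<lambda>(i, j). M $$ (i, j) / trace M)"
  define r where "r = Re (trace M)"
  have tr: "trace M = of_real r"
    unfolding r_def by (rule trace_psd(1)[OF psd])
  have "r \<noteq> 0"
    using False unfolding tr by simp
  hence pos: "0 < r"
    using trace_psd(2)[OF psd] unfolding r_def[symmetric] by simp
  have "psd n ?N"
  proof (rule psdI)
    fix v
    have "?N $$ (i, j) = M $$ (i, j) * of_real (1 / r)" if "i < n" "j < n" for i j
      using that unfolding tr by (simp add: divide_inverse of_real_inverse)
    hence "qform n ?N v = qform n M v * of_real (1 / r)"
      unfolding qform_def sum_distrib_right by (intro sum.cong refl) (simp add: algebra_simps)
    thus "Im (qform n ?N v) = 0 \<and> 0 \<le> Re (qform n ?N v)"
      using psd_qform[OF psd, of v] pos by simp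
  qed simp
  moreover have "dim_row M = n"
    using psd unfolding psd_def by auto
  hence "trace ?N = trace M / trace M"
    unfolding trace_def by (simp add: sum_divide_distrib[symmetric])
  ultimately show ?thesis
    unfolding is_state_def normalize_state_def using False by simp
qed

lemma normalize_state_scale:
  assumes psd: "psd n M" and ij: "i < n" "j < n"
  shows "trace M * normalize_state n M $$ (i, j) = M $$ (i, j)"
proof (cases "trace M = 0")
  case True
  hence "M $$ (i, j) = 0"
    using psd_eq_0_of_trace_0[OF psd _ ij] trace_psd(3)[OF psd] by simp
  thus ?thesis
    using True by simp
qed (simp add: normalize_state_def ij)

lemma psd_mat_of_psd2:
  assumes "psd2 Q"
  shows "psd 2 (mat 2 2 (\<lambda>(c, d). Q c d))"
proof (rule psdI)
  fix v
  have "qform 2 (mat 2 2 (\<lambda>(c, d). Q c d)) v = form2 Q v v"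
    unfolding qform_def form2_def sum_lessThan_2 by simp
  thus "Im (qform 2 (mat 2 2 (\<lambda>(c, d). Q c d)) v) = 0 \<and> 0 \<le> Re (qform 2 (mat 2 2 (\<lambda>(c, d). Q c d)) v)"
    using assms unfolding psd2_def by simp
qed simp

lemma separable_of_psd_products:
  fixes m :: nat
  assumes n: "0 < n" and P: "\<And>k. k < m \<Longrightarrow> psd 2 (P k)" and M: "\<And>k. k < m \<Longrightarrow> psd n (M k)"
    and tr: "(\<Sum>k<m. trace (P k) * trace (M k)) = 1"
    and carrier: "\<sigma> \<in> carrier_mat (2 * n) (2 * n)"
    and entries: "\<And>I J. I < 2 * n \<Longrightarrow> J < 2 * n \<Longrightarrow>
      \<sigma> $$ (I, J) = (\<Sum>k<m. P k $$ (I div n, J div n) * M k $$ (I mod n, J mod n))"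
  shows "separable n \<sigma>"
proof -
  define p where "p k = Re (trace (P k)) * Re (trace (M k))" for k
  define A where "A k = normalize_state 2 (P k)" for k
  define B where "B k = normalize_state n (M k)" for k
  have cA: "A k \<in> carrier_mat 2 2" and cB: "B k \<in> carrier_mat n n" for k
    unfolding A_def B_def by (simp_all add: normalize_state_carrier)
  have p: "of_real (p k) = trace (P k) * trace (M k)" if "k < m" for k
    unfolding p_def of_real_mult
    by (simp only: trace_psd(1)[OF P[OF that], symmetric] trace_psd(1)[OF M[OF that], symmetric])
  have "of_real (\<Sum>k<m. p k) = (1::complex)"
    unfolding of_real_sum tr[symmetric] by (rule sum.cong) (simp_all add: p)
  hence "(\<Sum>k<m. p k) = 1"
    by (simp only: of_real_eq_1_iff)
  moreover have "\<sigma> = mat (2 * n) (2 * n) (\<lambda>ij. \<Sum>k<m. of_real (p k) * kron (A k) (B k) $$ ij)"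
  proof (rule eq_matI)
    fix I J
    assume "I < dim_row (mat (2 * n) (2 * n) (\<lambda>ij. \<Sum>k<m. of_real (p k) * kron (A k) (B k) $$ ij))"
      "J < dim_col (mat (2 * n) (2 * n) (\<lambda>ij. \<Sum>k<m. of_real (p k) * kron (A k) (B k) $$ ij))"
    hence I: "I < 2 * n" and J: "J < 2 * n"
      by auto
    have cd: "I div n < 2" "J div n < 2"
      using I J by (auto simp: div_less_iff_less_mult mult.commute)
    have ij: "I mod n < n" "J mod n < n"
      using n by auto
    have "of_real (p k) * (A k $$ (I div n, J div n) * B k $$ (I mod n, J mod n))
        = P k $$ (I div n, J div n) * M k $$ (I mod n, J mod n)" if "k < m" for k
    proof -
      have "of_real (p k) * (A k $$ (I div n, J div n) * B k $$ (I mod n, J mod n))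
          = (trace (P k) * A k $$ (I div n, J div n)) * (trace (M k) * B k $$ (I mod n, J mod n))"
        unfolding p[OF that] by (simp add: algebra_simps)
      thus ?thesis
        unfolding A_def B_def normalize_state_scale[OF P[OF that] cd] normalize_state_scale[OF M[OF that] ij] .
    qed
    thus "\<sigma> $$ (I, J) = mat (2 * n) (2 * n) (\<lambda>ij. \<Sum>k<m. of_real (p k) * kron (A k) (B k) $$ ij) $$ (I, J)"
      unfolding entries[OF I J] index_mat(1)[OF I J] kron_index[OF cA cB I J]
      by (intro sum.cong refl) simp
  qed (use carrier in auto)
  moreover have "\<forall>k<m. 0 \<le> p k \<and> is_state 2 (A k) \<and> is_state n (B k)"
    unfolding p_def A_def B_def using trace_psd(2)[OF P] trace_psd(2)[OF M] P M is_state_normalize_state n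
    by simp
  ultimately show ?thesis
    unfolding separable_def by blast
qed

lemma entanglement_breaking_of_measure_prepare:
  assumes lin: "qubit_linear \<phi>" and tp: "trace_preserving \<phi>" and mp: "measure_prepare \<phi>"
  shows "entanglement_breaking \<phi>"
  unfolding entanglement_breaking_def
proof (intro allI impI)
  fix n \<rho>
  assume "is_state (2 * n) \<rho>"
  hence psd: "psd (2 * n) \<rho>" and tr: "trace \<rho> = 1"
    unfolding is_state_def by auto
  hence rc: "\<rho> \<in> carrier_mat (2 * n) (2 * n)"
    unfolding psd_def by auto
  hence n: "0 < n"
    using tr unfolding trace_def by (cases n) auto
  obtain m :: nat and f :: "nat \<Rightarrow> nat \<Rightarrow> complex" and Q :: "nat \<Rightarrow> nat \<Rightarrow> nat \<Rightarrow> complex"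
    where pQ: "\<forall>k<m. psd2 (Q k)"
      and choi: "\<forall>a<2. \<forall>b<2. \<forall>c<2. \<forall>d<2. choi \<phi> a b c d = (\<Sum>k<m. cnj (f k a) * f k b * Q k c d)"
    using mp unfolding measure_prepare_def by blast
  define P where "P k = mat 2 2 (\<lambda>(c, d). Q k c d)" for k
  have "(\<Sum>k<m. trace (P k) * trace (ancilla_block n \<rho> (f k))) = 1"
    unfolding P_def trace_def[of "mat 2 2 _"] using trace_measure_prepare[OF lin tp rc choi] tr
    by (simp add: sum_lessThan_2)
  moreover have "tensor_id \<phi> n \<rho> $$ (I, J)
      = (\<Sum>k<m. P k $$ (I div n, J div n) * ancilla_block n \<rho> (f k) $$ (I mod n, J mod n))"
    if "I < 2 * n" "J < 2 * n" for I J
    unfolding tensor_id_measure_prepare[OF lin that choi] P_def using that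
    by (simp add: div_less_iff_less_mult mult.commute)
  ultimately show "separable n (tensor_id \<phi> n \<rho>)"
    using n pQ psd_mat_of_psd2 psd_ancilla_block[OF psd]
    by (intro separable_of_psd_products[where P = P and M = "\<lambda>k. ancilla_block n \<rho> (f k)"])
      (simp_all add: P_def tensor_id_def)
qed

theorem mainTheorem9:
  fixes \<phi> :: "complex mat \<Rightarrow> complex mat"
  assumes "qubit_channel \<phi>"
    and "det_superop \<phi> = 0"
  shows "entanglement_breaking \<phi>"
proof -
  have lin: "qubit_linear \<phi>" and cp: "completely_positive \<phi>" and tp: "trace_preserving \<phi>"
    using assms(1) unfolding qubit_channel_def by auto
  have "measure_prepare \<phi>"
    using measure_prepare_of_det_zero[OF lin cp tp assms(2)] .
  thus ?thesis
    by (rule entanglement_breaking_of_measure_prepare[OF lin tp])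
qed

end
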